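(* Let $\vec p$ be a no-signalling box. (i) For any real coefficients $B(a,b|x,y)$ defining the linear functional $B(\vec q)=\sum_{a,b,x,y}B(a,b|x,y)q(a,b|x,y)$ and satisfying $|B(\vec p_{\mathcal{L}})|\le1$ for all $\vec p_{\mathcal{L}}\in\mathcal{L}$, setting $B^{\mathcal{Q}_{\max}}:=\sup_{\vec p_{\mathcal{Q}}\in\mathcal{Q}}|B(\vec p_{\mathcal{Q}})|$, one has $$\frac{|B(\vec p)|/B^{\mathcal{Q}_{\max}}-1}{2}\le r_{\mathbb{D}}(\vec p),$$ equivalently $\|O\|_1\ge|B(\vec p)|/B^{\mathcal{Q}_{\max}}$ for every pseudo-state $O$ with $O\rightarrow\vec p$. (ii) Setting $b_{\mathcal{L}}^{\mathcal{Q}_{\max}}:=\sup_{\vec p_{\mathcal{Q}}\in\mathcal{Q}}b_{\mathcal{L}}(\vec p_{\mathcal{Q}})$, one has $$\frac{b_{\mathcal{L}}(\vec p)/b_{\mathcal{L}}^{\mathcal{Q}_{\max}}-1}{2}\le r_{\mathbb{D}}(\vec p),$$ equivalently $\|O\|_1\ge b_{\mathcal{L}}(\vec p)/b_{\mathcal{L}}^{\mathcal{Q}_{\max}}$ for every $O\rightarrow\vec p$.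
   Context: Boxes $\vec p=(p(a,b|x,y))$ over fixed finite alphabets; $\mathcal{L}$ is the set of local boxes $\sum_iq_ip_A^i(a|x)p_B^i(b|y)$ (convex combinations of products of local conditional distributions); $\mathcal{Q}$ is the set of boxes $\mathrm{Tr}(M_{a|x}\otimes N_{b|y}\rho)$ with $\rho$ a density operator on a finite-dimensional bipartite space and local POVMs. $b_{\mathcal{L}}(\vec p):=\min\{\sum_i|c_i|:\ \vec p=\sum_ic_i\vec p^{\,i},\ \vec p^{\,i}\in\mathcal{L},\ c_i\in\mathbb{R},\ \sum_ic_i=1\}$. A pseudo-state is a Hermitian unit-trace operator on a finite-dimensional bipartite space; $O\rightarrow\vec p$ means $p(a,b|x,y)=\mathrm{Tr}(M_{a|x}\otimes N_{b|y}O)$ for some local POVMs. $r_{\mathbb{D}}(O):=\min\{t\ge0:\exists\rho'\text{ density op.},\ (O+t\rho')/(1+t)\text{ is a density operator}\}$ and $r_{\mathbb{D}}(\vec p):=\inf_{O\rightarrow\vec p}r_{\mathbb{D}}(O)$. $\|\cdot\|_1$ is the trace norm. *)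

theory Defs
  imports "Jordan_Normal_Form.Char_Poly"
begin

text \<open>A box is p(a,b|x,y), written p a b x y, with outputs a::'a, b::'b and inputs x::'x, y::'y,
  all ranging over finite types.\<close>

definition no_signalling :: "('a::finite \<Rightarrow> 'b::finite \<Rightarrow> 'x::finite \<Rightarrow> 'y::finite \<Rightarrow> real) \<Rightarrow> bool" where
  "no_signalling p \<longleftrightarrow>
     (\<forall>a b x y. 0 \<le> p a b x y) \<and>
     (\<forall>x y. (\<Sum>a\<in>UNIV. \<Sum>b\<in>UNIV. p a b x y) = 1) \<and>
     (\<forall>a x y y'. (\<Sum>b\<in>UNIV. p a b x y) = (\<Sum>b\<in>UNIV. p a b x y')) \<and>
     (\<forall>b x x' y. (\<Sum>a\<in>UNIV. p a b x y) = (\<Sum>a\<in>UNIV. p a b x' y))"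

text \<open>Local conditional distribution P(a|x), written P x a.\<close>
definition cond_dist :: "('x::finite \<Rightarrow> 'a::finite \<Rightarrow> real) \<Rightarrow> bool" where
  "cond_dist P \<longleftrightarrow> (\<forall>x a. 0 \<le> P x a) \<and> (\<forall>x. (\<Sum>a\<in>UNIV. P x a) = 1)"

definition local_box :: "('a::finite \<Rightarrow> 'b::finite \<Rightarrow> 'x::finite \<Rightarrow> 'y::finite \<Rightarrow> real) \<Rightarrow> bool" where
  "local_box p \<longleftrightarrow>
     (\<exists>(n::nat) (q::nat \<Rightarrow> real) (PA::nat \<Rightarrow> 'x \<Rightarrow> 'a \<Rightarrow> real) (PB::nat \<Rightarrow> 'y \<Rightarrow> 'b \<Rightarrow> real).
        (\<forall>i<n. 0 \<le> q i) \<and> (\<Sum>i<n. q i) = 1 \<and>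
        (\<forall>i<n. cond_dist (PA i) \<and> cond_dist (PB i)) \<and>
        (\<forall>a b x y. p a b x y = (\<Sum>i<n. q i * PA i x a * PB i y b)))"

definition adj :: "complex mat \<Rightarrow> complex mat" where
  "adj A = mat (dim_col A) (dim_row A) (\<lambda>(i,j). cnj (A $$ (j,i)))"

definition mtrace :: "complex mat \<Rightarrow> complex" where
  "mtrace A = (\<Sum>i<dim_row A. A $$ (i,i))"

definition hermitian :: "nat \<Rightarrow> complex mat \<Rightarrow> bool" where
  "hermitian n A \<longleftrightarrow> A \<in> carrier_mat n n \<and> adj A = A"

definition psd :: "nat \<Rightarrow> complex mat \<Rightarrow> bool" where
  "psd n A \<longleftrightarrow> hermitian n A \<and>
     (\<forall>v::nat \<Rightarrow> complex. 0 \<le> Re (\<Sum>i<n. \<Sum>j<n. cnj (v i) * A $$ (i,j) * v j))"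

definition density :: "nat \<Rightarrow> complex mat \<Rightarrow> bool" where
  "density n \<rho> \<longleftrightarrow> psd n \<rho> \<and> mtrace \<rho> = 1"

definition pseudo_state :: "nat \<Rightarrow> complex mat \<Rightarrow> bool" where
  "pseudo_state n Op \<longleftrightarrow> hermitian n Op \<and> mtrace Op = 1"

definition kron :: "nat \<Rightarrow> nat \<Rightarrow> complex mat \<Rightarrow> complex mat \<Rightarrow> complex mat" where
  "kron dA dB A B = mat (dA * dB) (dA * dB)
     (\<lambda>(i,j). A $$ (i div dB, j div dB) * B $$ (i mod dB, j mod dB))"

definition povm :: "nat \<Rightarrow> ('x::finite \<Rightarrow> 'a::finite \<Rightarrow> complex mat) \<Rightarrow> bool" where
  "povm d M \<longleftrightarrow> (\<forall>x a. psd d (M x a)) \<and>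
     (\<forall>x i j. i < d \<longrightarrow> j < d \<longrightarrow> (\<Sum>a\<in>UNIV. M x a $$ (i,j)) = (if i = j then 1 else 0))"

text \<open>Op \<rightarrow> p on the bipartite space C^dA \<otimes> C^dB.\<close>
definition realizes :: "nat \<Rightarrow> nat \<Rightarrow> complex mat \<Rightarrow>
    ('a::finite \<Rightarrow> 'b::finite \<Rightarrow> 'x::finite \<Rightarrow> 'y::finite \<Rightarrow> real) \<Rightarrow> bool" where
  "realizes dA dB Op p \<longleftrightarrow>
     (\<exists>(M::'x \<Rightarrow> 'a \<Rightarrow> complex mat) (N::'y \<Rightarrow> 'b \<Rightarrow> complex mat). povm dA M \<and> povm dB N \<and>
        (\<forall>a b x y. complex_of_real (p a b x y) = mtrace (kron dA dB (M x a) (N y b) * Op)))"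

definition quantum_box :: "('a::finite \<Rightarrow> 'b::finite \<Rightarrow> 'x::finite \<Rightarrow> 'y::finite \<Rightarrow> real) \<Rightarrow> bool" where
  "quantum_box p \<longleftrightarrow> (\<exists>dA dB \<rho>. density (dA * dB) \<rho> \<and> realizes dA dB \<rho> p)"

definition b_L :: "('a::finite \<Rightarrow> 'b::finite \<Rightarrow> 'x::finite \<Rightarrow> 'y::finite \<Rightarrow> real) \<Rightarrow> real" where
  "b_L p = Inf {(\<Sum>i<n. \<bar>c i\<bar>) | (n::nat) c ps.
      (\<forall>i<n. local_box (ps i)) \<and> (\<Sum>i<n. c i) = 1 \<and>
      (\<forall>a b x y. p a b x y = (\<Sum>i<n. c i * ps i a b x y))}"

definition r_D_op :: "nat \<Rightarrow> complex mat \<Rightarrow> real" where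
  "r_D_op n Op = Inf {t. 0 \<le> t \<and>
      (\<exists>\<rho>'. density n \<rho>' \<and> density n ((1 / (1 + complex_of_real t)) \<cdot>\<^sub>m (Op + complex_of_real t \<cdot>\<^sub>m \<rho>')))}"

definition r_D_box :: "('a::finite \<Rightarrow> 'b::finite \<Rightarrow> 'x::finite \<Rightarrow> 'y::finite \<Rightarrow> real) \<Rightarrow> real" where
  "r_D_box p = Inf {r_D_op (dA * dB) Op | dA dB Op. pseudo_state (dA * dB) Op \<and> realizes dA dB Op p}"

text \<open>Trace norm: sum of the singular values, i.e. of the square roots of the eigenvalues
  (with multiplicity) of Op^* Op.\<close>
definition trace_norm :: "complex mat \<Rightarrow> real" where
  "trace_norm Op = sum_mset (image_mset (\<lambda>z. sqrt (Re z)) (proots (char_poly (adj Op * Op))))"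

definition Bval :: "('a::finite \<Rightarrow> 'b::finite \<Rightarrow> 'x::finite \<Rightarrow> 'y::finite \<Rightarrow> real) \<Rightarrow>
    ('a \<Rightarrow> 'b \<Rightarrow> 'x \<Rightarrow> 'y \<Rightarrow> real) \<Rightarrow> real" where
  "Bval B q = (\<Sum>a\<in>UNIV. \<Sum>b\<in>UNIV. \<Sum>x\<in>UNIV. \<Sum>y\<in>UNIV. B a b x y * q a b x y)"

end

theory Submission
  imports Defs "Jordan_Normal_Form.Schur_Decomposition"
begin

(* The heart of the argument is a Jordan decomposition: by the spectral theorem every
   pseudo-state O (Hermitian, unit trace) can be written as O = (1 + t) rho1 - t rho2 with
   density operators rho1, rho2, t >= 0 and trace norm ||O||_1 = 1 + 2t.  Measuring with the
   local POVMs that realise p from O then splits the box as p = (1 + t) q1 - t q2 with quantum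
   boxes q1, q2.  Hence any quantity X with X <= 1 + 2t for all such splittings of p (we say
   "X bounds the quantum splittings of p") satisfies X <= ||O||_1, and also (X - 1)/2 <= r_D(O),
   since every t admissible in the definition of r_D(O) yields such a splitting.
   Both |B(p)|/B^Q_max and b_L(p)/b_L^Q_max have this property: the first by linearity of B,
   the second by subadditivity of b_L under affine combinations. *)

lemma mat_mult_index_sum:
  assumes "X \<in> carrier_mat n m" "Y \<in> carrier_mat m l" "i < n" "j < l"
  shows "(X * Y) $$ (i,j) = (\<Sum>k<m. X $$ (i,k) * Y $$ (k,j))"
  using assms by (simp add: scalar_prod_def atLeast0LessThan)

lemma adj_carrier[simp]: "A \<in> carrier_mat n m \<Longrightarrow> adj A \<in> carrier_mat m n"
  unfolding adj_def carrier_mat_def by auto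

lemma adj_dims[simp]: "dim_row (adj A) = dim_col A" "dim_col (adj A) = dim_row A"
  unfolding adj_def by auto

lemma adj_index[simp]: "i < dim_col A \<Longrightarrow> j < dim_row A \<Longrightarrow> adj A $$ (i,j) = cnj (A $$ (j,i))"
  unfolding adj_def by auto

lemma adj_adj[simp]: "adj (adj A) = A"
  by (rule eq_matI, auto)

lemma adj_mult: assumes "A \<in> carrier_mat n m" "B \<in> carrier_mat m k"
  shows "adj (A * B) = adj B * adj A"
proof (rule eq_matI)
  fix i j assume ij: "i < dim_row (adj B * adj A)" "j < dim_col (adj B * adj A)"
  then show "adj (A * B) $$ (i, j) = (adj B * adj A) $$ (i, j)"
    using assms by (auto simp: scalar_prod_def row_def col_def mult.commute intro!: sum.cong)
qed (use assms in auto)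

lemma adj_one[simp]: "adj (1\<^sub>m n) = 1\<^sub>m n"
  by (rule eq_matI, auto)

lemma adj_zero[simp]: "adj (0\<^sub>m n m) = 0\<^sub>m m n"
  by (rule eq_matI, auto)

lemma adj_four_block: assumes "A \<in> carrier_mat n1 m1" "B \<in> carrier_mat n1 m2"
  "C \<in> carrier_mat n2 m1" "D \<in> carrier_mat n2 m2"
  shows "adj (four_block_mat A B C D) = four_block_mat (adj A) (adj C) (adj B) (adj D)"
  by (rule eq_matI, insert assms, auto)

definition unitary :: "nat \<Rightarrow> complex mat \<Rightarrow> bool" where
  "unitary n U \<longleftrightarrow> U \<in> carrier_mat n n \<and> adj U * U = 1\<^sub>m n \<and> U * adj U = 1\<^sub>m n"

lemma unitaryD:
  assumes "unitary n U"
  shows "U \<in> carrier_mat n n" "adj U \<in> carrier_mat n n" "adj U * U = 1\<^sub>m n" "U * adj U = 1\<^sub>m n"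
  using assms unfolding unitary_def by auto

lemma unitary_mult: assumes "unitary n U" "unitary n V" shows "unitary n (U * V)"
proof -
  note U = unitaryD[OF assms(1)] and V = unitaryD[OF assms(2)]
  have "adj (U * V) * (U * V) = adj V * ((adj U * U) * V)"
    by (simp add: adj_mult[OF U(1) V(1)] assoc_mult_mat[OF V(2) U(2) mult_carrier_mat[OF U(1) V(1)]]
       assoc_mult_mat[OF U(2) U(1) V(1)])
  also have "\<dots> = 1\<^sub>m n" using U V by simp
  finally have 1: "adj (U * V) * (U * V) = 1\<^sub>m n" .
  have "(U * V) * adj (U * V) = U * ((V * adj V) * adj U)"
    by (simp add: adj_mult[OF U(1) V(1)] assoc_mult_mat[OF U(1) V(1) mult_carrier_mat[OF V(2) U(2)]]
       assoc_mult_mat[OF V(1) V(2) U(2)])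
  also have "\<dots> = 1\<^sub>m n" using U V by simp
  finally show ?thesis using 1 U V unfolding unitary_def by auto
qed

lemma unitary_conj_conj:
  assumes W: "W \<in> carrier_mat n n" and V: "V \<in> carrier_mat n n" and T: "T \<in> carrier_mat n n"
  shows "(W * V) * T * adj (W * V) = W * (V * T * adj V) * adj W"
proof -
  have WV: "adj (W * V) = adj V * adj W" by (rule adj_mult[OF W V])
  have VT: "V * T \<in> carrier_mat n n" using V T by auto
  have "(W * V) * T * (adj V * adj W) = W * (V * T) * (adj V * adj W)"
    using assoc_mult_mat[OF W V T] by simp
  also have "\<dots> = W * ((V * T) * (adj V * adj W))"
    using assoc_mult_mat[OF W VT mult_carrier_mat[OF adj_carrier[OF V] adj_carrier[OF W]]] .
  also have "(V * T) * (adj V * adj W) = (V * T * adj V) * adj W"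
    using assoc_mult_mat[OF VT adj_carrier[OF V] adj_carrier[OF W]] by simp
  also have "W * ((V * T * adj V) * adj W) = W * (V * T * adj V) * adj W"
    using assoc_mult_mat[OF W mult_carrier_mat[OF VT adj_carrier[OF V]] adj_carrier[OF W]] by simp
  finally show ?thesis unfolding WV .
qed

lemma unitary_conj_inverse:
  assumes W: "unitary n W" and A: "A \<in> carrier_mat n n"
  shows "W * (adj W * A * W) * adj W = A"
proof -
  note Wu = unitaryD[OF W]
  have "W * (adj W * A * W) = (W * adj W) * (A * W)"
    using assoc_mult_mat[OF Wu(2) A Wu(1)] assoc_mult_mat[OF Wu(1,2) mult_carrier_mat[OF A Wu(1)]]
    by simp
  also have "\<dots> = A * W" using Wu A by simp
  finally have "W * (adj W * A * W) * adj W = A * W * adj W" by simp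
  also have "\<dots> = A * (W * adj W)" by (rule assoc_mult_mat[OF A Wu(1,2)])
  also have "\<dots> = A" using Wu A by simp
  finally show ?thesis .
qed

lemma cscal_smult: assumes "w \<in> carrier_vec n" "w' \<in> carrier_vec n"
  shows "(a \<cdot>\<^sub>v w) \<bullet>c (b \<cdot>\<^sub>v w') = a * cnj b * (w \<bullet>c w' :: complex)"
  using assms by (simp add: scalar_prod_def sum_distrib_left mult_ac)

lemma cscal_self_real: fixes w :: "complex vec"
  obtains r where "w \<bullet>c w = complex_of_real r" "r \<ge> 0"
proof -
  have "Im (w \<bullet>c w) = 0" "Re (w \<bullet>c w) \<ge> 0"
    using conjugate_square_ge_0_vec[of w] by (auto simp: less_eq_complex_def)
  then show ?thesis using that[of "Re (w \<bullet>c w)"] by (simp add: complex_eq_iff)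
qed

definition normalize_cvec :: "complex vec \<Rightarrow> complex vec" where
  "normalize_cvec w = complex_of_real (1 / sqrt (Re (w \<bullet>c w))) \<cdot>\<^sub>v w"

lemma normalize_cvec_cscal:
  assumes w: "w \<in> carrier_vec n" and w': "w' \<in> carrier_vec n"
  shows "normalize_cvec w \<bullet>c normalize_cvec w' =
    complex_of_real (1 / sqrt (Re (w \<bullet>c w)) * (1 / sqrt (Re (w' \<bullet>c w')))) * (w \<bullet>c w')"
  unfolding normalize_cvec_def cscal_smult[OF w w'] by simp

lemma normalize_cvec_unit:
  assumes w: "w \<in> carrier_vec n" and nz: "w \<noteq> 0\<^sub>v n"
  shows "normalize_cvec w \<bullet>c normalize_cvec w = 1"
proof -
  obtain r where r: "w \<bullet>c w = complex_of_real r" "r \<ge> 0" by (rule cscal_self_real)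
  have "r > 0" using r w nz by (metis conjugate_square_eq_0_vec of_real_0 order_le_less)
  then show ?thesis unfolding normalize_cvec_cscal[OF w w] r by (simp flip: of_real_mult)
qed

lemma normalize_cvec_carrier[simp]: "w \<in> carrier_vec n \<Longrightarrow> normalize_cvec w \<in> carrier_vec n"
  unfolding normalize_cvec_def by simp

lemma normalize_cvec_id: "w \<bullet>c w = 1 \<Longrightarrow> normalize_cvec w = w"
  unfolding normalize_cvec_def by simp

lemma unitary_mat_of_cols:
  assumes ws: "set ws \<subseteq> carrier_vec n" "length ws = n"
    and on: "\<And>i j. i < n \<Longrightarrow> j < n \<Longrightarrow> ws ! i \<bullet>c ws ! j = (if i = j then 1 else 0)"
  shows "unitary n (mat_of_cols n ws)"
proof -
  define W where "W = mat_of_cols n ws"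
  have Wc: "W \<in> carrier_mat n n" unfolding W_def using ws by auto
  have 1: "adj W * W = 1\<^sub>m n"
  proof (rule eq_matI)
    fix i j assume "i < dim_row (1\<^sub>m n)" "j < dim_col (1\<^sub>m n)"
    hence ij: "i < n" "j < n" by auto
    have wi: "ws ! i \<in> carrier_vec n" "ws ! j \<in> carrier_vec n" using ws ij by (auto simp: set_conv_nth)
    have "(adj W * W) $$ (i,j) = (\<Sum>k<n. cnj (W $$ (k,i)) * W $$ (k,j))"
      using Wc ij by (simp add: scalar_prod_def row_def col_def atLeast0LessThan)
    also have "\<dots> = ws ! j \<bullet>c ws ! i"
      using wi ij ws
      by (auto simp: scalar_prod_def atLeast0LessThan mult.commute W_def mat_of_cols_index intro!: sum.cong)
    finally show "(adj W * W) $$ (i,j) = 1\<^sub>m n $$ (i,j)" using on ij by auto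
  qed (use Wc in auto)
  have 2: "W * adj W = 1\<^sub>m n" using mat_mult_left_right_inverse[OF adj_carrier[OF Wc] Wc 1] .
  show ?thesis using Wc 1 2 unfolding unitary_def W_def by auto
qed

lemma corthogonal_normalize:
  assumes orth: "corthogonal ws" and wsc: "set ws \<subseteq> carrier_vec n"
    and ij: "i < length ws" "j < length ws"
  shows "map normalize_cvec ws ! i \<bullet>c map normalize_cvec ws ! j = (if i = j then 1 else 0)"
proof -
  have wsi: "ws ! k \<in> carrier_vec n" if "k < length ws" for k using wsc that by (auto simp: set_conv_nth)
  show ?thesis
  proof (cases "i = j")
    case True
    have "ws ! i \<bullet>c ws ! i \<noteq> 0" using orth ij by (auto simp: corthogonal_def)
    hence "ws ! i \<noteq> 0\<^sub>v n" by auto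
    then show ?thesis using True ij normalize_cvec_unit[OF wsi[OF ij(1)]] by simp
  next
    case False
    then show ?thesis using orth ij by (simp add: normalize_cvec_cscal[OF wsi wsi] corthogonal_def)
  qed
qed

text \<open>Every unit vector is the first column of some unitary matrix (Gram--Schmidt applied to a
  basis completion, followed by normalisation).\<close>
lemma unitary_extend:
  fixes u :: "complex vec"
  assumes u: "u \<in> carrier_vec n" and u1: "u \<bullet>c u = 1"
  shows "\<exists>W. unitary n W \<and> col W 0 = u"
proof -
  interpret cof_vec_space n "TYPE(complex)" .
  have u0: "u \<noteq> 0\<^sub>v n" using u1 u by auto
  have n0: "n \<noteq> 0" using u0 u by auto
  define b where "b = basis_completion u"
  from basis_completion[OF u u0, folded b_def]
  have dist_b: "distinct b" and indep: "\<not> lin_dep (set b)" and bc: "set b \<subseteq> carrier_vec n"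
    and len_b: "length b = n" and hdb: "hd b = u" by auto
  from hdb len_b n0 obtain vs where bv: "b = u # vs" by (cases b, auto)
  define ws where "ws = gram_schmidt n b"
  from gram_schmidt_result[OF bc dist_b indep refl, folded ws_def]
  have wsc: "set ws \<subseteq> carrier_vec n" and orth: "corthogonal ws" and lws: "length ws = n"
    by (auto simp: len_b)
  have hdws: "hd ws = u" unfolding ws_def bv using gram_schmidt_hd[OF u] by simp
  define ws' where "ws' = map normalize_cvec ws"
  have ws'c: "set ws' \<subseteq> carrier_vec n" using wsc unfolding ws'_def by auto
  have "unitary n (mat_of_cols n ws')"
    by (rule unitary_mat_of_cols[OF ws'c])
      (use corthogonal_normalize[OF orth wsc] lws in \<open>simp_all add: ws'_def\<close>)
  moreover have "col (mat_of_cols n ws') 0 = u"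
  proof -
    have "ws' ! 0 = normalize_cvec u" using hdws lws n0 unfolding ws'_def by (cases ws) auto
    moreover have "col (mat_of_cols n ws') 0 = ws' ! 0"
      by (rule col_mat_of_cols) (use ws'c lws n0 in \<open>auto simp: ws'_def\<close>)
    ultimately show ?thesis using normalize_cvec_id[OF u1] by simp
  qed
  ultimately show ?thesis by blast
qed

lemma unit_eigenvector: fixes A :: "complex mat"
  assumes A: "A \<in> carrier_mat n n" and n: "n > 0"
  shows "\<exists>e u. u \<in> carrier_vec n \<and> u \<bullet>c u = 1 \<and> A *\<^sub>v u = e \<cdot>\<^sub>v u"
proof -
  have "degree (char_poly A) = n" using degree_monic_char_poly[OF A] by auto
  hence "\<not> constant (poly (char_poly A))" using n by (simp add: constant_degree)
  from fundamental_theorem_of_algebra[OF this] obtain e where "poly (char_poly A) e = 0" by auto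
  hence "eigenvalue A e" using eigenvalue_root_char_poly[OF A] by auto
  from find_eigenvector[OF A this] obtain v where "eigenvector A v e" by auto
  hence v: "v \<in> carrier_vec n" "v \<noteq> 0\<^sub>v n" "A *\<^sub>v v = e \<cdot>\<^sub>v v" using A unfolding eigenvector_def by auto
  have "A *\<^sub>v normalize_cvec v = e \<cdot>\<^sub>v normalize_cvec v" unfolding normalize_cvec_def using v A
    by (simp add: mult_mat_vec smult_smult_assoc mult.commute)
  with v normalize_cvec_unit[OF v(1,2)] show ?thesis by (meson normalize_cvec_carrier)
qed

lemma unitary_deflate:
  assumes A: "A \<in> carrier_mat n n" and W: "unitary n W" and n: "0 < n"
    and u: "col W 0 = u" and eig: "A *\<^sub>v u = e \<cdot>\<^sub>v u" and i: "i < n"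
  shows "(adj W * A * W) $$ (i,0) = (if i = 0 then e else 0)"
proof -
  note Wu = unitaryD[OF W]
  have AW0: "(A * W) $$ (k,0) = e * W $$ (k,0)" if k: "k < n" for k
  proof -
    have "(A * W) $$ (k,0) = (A *\<^sub>v u) $ k" using A Wu k n u by (simp add: index_mult_mat)
    also have "\<dots> = e * u $ k" using eig u Wu(1) k by auto
    also have "u $ k = W $$ (k,0)" using u Wu(1) k n by auto
    finally show ?thesis .
  qed
  have "adj W * A * W = adj W * (A * W)" using assoc_mult_mat[OF Wu(2) A Wu(1)] .
  hence "(adj W * A * W) $$ (i,0) = (\<Sum>k<n. adj W $$ (i,k) * (A * W) $$ (k,0))"
    using mat_mult_index_sum[OF Wu(2) mult_carrier_mat[OF A Wu(1)] i n] by simp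
  also have "\<dots> = e * (\<Sum>k<n. adj W $$ (i,k) * W $$ (k,0))"
    unfolding sum_distrib_left by (rule sum.cong) (auto simp: AW0)
  also have "(\<Sum>k<n. adj W $$ (i,k) * W $$ (k,0)) = (adj W * W) $$ (i,0)"
    using mat_mult_index_sum[OF Wu(2,1) i n] by simp
  also have "(adj W * W) $$ (i,0) = 1\<^sub>m n $$ (i,0)" by (simp only: Wu(3))
  finally show ?thesis using i n by auto
qed

definition block_unitary :: "nat \<Rightarrow> complex mat \<Rightarrow> complex mat" where
  "block_unitary m V = four_block_mat (1\<^sub>m 1) (0\<^sub>m 1 m) (0\<^sub>m m 1) V"

lemma adj_block_unitary: assumes V: "V \<in> carrier_mat m m"
  shows "adj (block_unitary m V) = four_block_mat (1\<^sub>m 1) (0\<^sub>m 1 m) (0\<^sub>m m 1) (adj V)"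
  unfolding block_unitary_def
  by (subst adj_four_block[OF one_carrier_mat zero_carrier_mat zero_carrier_mat V]) simp

lemma unitary_block_unitary: assumes V: "unitary m V" shows "unitary (Suc m) (block_unitary m V)"
proof -
  note Vu = unitaryD[OF V]
  note aV' = adj_block_unitary[OF Vu(1)]
  have one4: "four_block_mat (1\<^sub>m 1) (0\<^sub>m 1 m) (0\<^sub>m m 1) (1\<^sub>m m) = (1\<^sub>m (1+m) :: complex mat)"
    by (rule eq_matI) auto
  have "adj (block_unitary m V) * block_unitary m V = 1\<^sub>m (1+m)"
    unfolding aV' unfolding block_unitary_def
    by (subst mult_four_block_mat[where ?nr1.0=1 and ?n1.0=1 and ?n2.0=m and ?nr2.0=m and ?nc1.0=1 and ?nc2.0=m])
      (use Vu one4 in auto)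
  moreover have "block_unitary m V * adj (block_unitary m V) = 1\<^sub>m (1+m)"
    unfolding aV' unfolding block_unitary_def
    by (subst mult_four_block_mat[where ?nr1.0=1 and ?n1.0=1 and ?n2.0=m and ?nr2.0=m and ?nc1.0=1 and ?nc2.0=m])
      (use Vu one4 in auto)
  ultimately show ?thesis using Vu unfolding unitary_def block_unitary_def by auto
qed

lemma block_unitary_conj:
  assumes V: "unitary m V" and A1: "A1 \<in> carrier_mat 1 1" and A2: "A2 \<in> carrier_mat 1 m"
    and T3: "T3 \<in> carrier_mat m m"
  shows "block_unitary m V * four_block_mat A1 (A2 * V) (0\<^sub>m m 1) T3 * adj (block_unitary m V)
       = four_block_mat A1 A2 (0\<^sub>m m 1) (V * T3 * adj V)"
proof -
  note Vu = unitaryD[OF V]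
  note aV' = adj_block_unitary[OF Vu(1)]
  have AVc: "A2 * V \<in> carrier_mat 1 m" using A2 Vu by auto
  have VTc: "V * T3 \<in> carrier_mat m m" using Vu T3 by auto
  have "block_unitary m V * four_block_mat A1 (A2 * V) (0\<^sub>m m 1) T3
      = four_block_mat A1 (A2 * V) (0\<^sub>m m 1) (V * T3)"
    unfolding block_unitary_def
    by (subst mult_four_block_mat[OF one_carrier_mat zero_carrier_mat zero_carrier_mat Vu(1) A1 AVc
          zero_carrier_mat T3]) (use A1 AVc VTc T3 left_mult_zero_mat[OF AVc, of m] left_mult_one_mat[OF AVc] right_mult_zero_mat[OF Vu(1)] in simp)
  also have "\<dots> * adj (block_unitary m V)
      = four_block_mat A1 (A2 * V * adj V) (0\<^sub>m m 1) (V * T3 * adj V)"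
    unfolding aV'
    by (subst mult_four_block_mat[OF A1 AVc zero_carrier_mat VTc one_carrier_mat zero_carrier_mat
          zero_carrier_mat Vu(2)])
      (use A1 AVc Vu right_mult_zero_mat[OF AVc, of 1] right_mult_zero_mat[OF VTc, of 1]
        mult_carrier_mat[OF VTc Vu(2)] in simp)
  also have "A2 * V * adj V = A2 * (V * adj V)" by (rule assoc_mult_mat[OF A2 Vu(1,2)])
  also have "\<dots> = A2" using Vu A2 by simp
  finally show ?thesis .
qed

text \<open>Schur: every complex square matrix is unitarily similar to an upper triangular one.
  Induction on the size: deflate by a unit eigenvector, triangularise the remaining block.\<close>
lemma unitary_schur:
  fixes A :: "complex mat"
  assumes "A \<in> carrier_mat n n"
  shows "\<exists>U T. unitary n U \<and> T \<in> carrier_mat n n \<and> upper_triangular T \<and> A = U * T * adj U"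
  using assms
proof (induct n arbitrary: A)
  case 0
  have "A = 1\<^sub>m 0 * A * adj (1\<^sub>m 0)" using 0 by (intro eq_matI) auto
  then show ?case using 0 by (intro exI[of _ "1\<^sub>m 0"] exI[of _ A]) (auto simp: unitary_def upper_triangular_def)
next
  case (Suc m A)
  have A: "A \<in> carrier_mat (Suc m) (Suc m)" by fact
  obtain e u where u: "u \<in> carrier_vec (Suc m)" "u \<bullet>c u = 1" "A *\<^sub>v u = e \<cdot>\<^sub>v u"
    using unit_eigenvector[OF A] by auto
  obtain W where W: "unitary (Suc m) W" "col W 0 = u" using unitary_extend[OF u(1,2)] by auto
  note Wu = unitaryD[OF W(1)]
  define A' where "A' = adj W * A * W"
  have A'c: "A' \<in> carrier_mat (1 + m) (1 + m)" unfolding A'_def using Wu A by auto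
  obtain A1 A2 A0 A3 where sp: "split_block A' 1 1 = (A1,A2,A0,A3)" by (cases "split_block A' 1 1") auto
  note blk = split_block[OF sp carrier_matD[OF A'c]]
  have A0: "A0 = 0\<^sub>m m 1"
  proof (rule eq_matI)
    fix i j assume "i < dim_row (0\<^sub>m m 1 :: complex mat)" "j < dim_col (0\<^sub>m m 1 :: complex mat)"
    hence ij: "i < m" "j = 0" by auto
    have "A' $$ (1 + i, 0) = A0 $$ (i, 0)" using blk ij by simp
    thus "A0 $$ (i,j) = 0\<^sub>m m 1 $$ (i,j)"
      using unitary_deflate[OF A W(1) _ W(2) u(3), of "1 + i"] ij unfolding A'_def by auto
  qed (use blk in auto)
  obtain V T3 where V: "unitary m V" "T3 \<in> carrier_mat m m" "upper_triangular T3" "A3 = V * T3 * adj V"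
    using Suc(1)[OF blk(4)] by auto
  define T where "T = four_block_mat A1 (A2 * V) (0\<^sub>m m 1) T3"
  have Tc: "T \<in> carrier_mat (Suc m) (Suc m)" unfolding T_def using blk V unitaryD[OF V(1)] by auto
  have uT: "upper_triangular T" unfolding T_def
    by (rule upper_triangular_four_block[OF blk(1) V(2) _ V(3)]) (use blk in \<open>auto simp: upper_triangular_def\<close>)
  have A'eq: "block_unitary m V * T * adj (block_unitary m V) = A'"
    unfolding T_def block_unitary_conj[OF V(1) blk(1,2) V(2)] using blk A0 V by simp
  have "W * A' * adj W = A" unfolding A'_def by (rule unitary_conj_inverse[OF W(1) A])
  moreover note unitaryD[OF unitary_block_unitary[OF V(1)]]
  ultimately have "(W * block_unitary m V) * T * adj (W * block_unitary m V) = A"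
    using unitary_conj_conj[OF Wu(1) _ Tc] A'eq by simp
  then show ?case using unitary_mult[OF W(1) unitary_block_unitary[OF V(1)]] Tc uT by metis
qed

text \<open>The real diagonal matrix with entries d 0, ..., d (n - 1).  Spectral decompositions are
  written U * dmat n d * adj U with U unitary.\<close>
definition dmat :: "nat \<Rightarrow> (nat \<Rightarrow> real) \<Rightarrow> complex mat" where
  "dmat n d = mat n n (\<lambda>(i,j). if i = j then complex_of_real (d i) else 0)"

lemma dmat_carrier[simp]: "dmat n d \<in> carrier_mat n n" unfolding dmat_def by auto
lemma dmat_dims[simp]: "dim_row (dmat n d) = n" "dim_col (dmat n d) = n" unfolding dmat_def by auto

lemma adj_dmat[simp]: "adj (dmat n d) = dmat n d"
  unfolding dmat_def by (rule eq_matI) auto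

lemma mtrace_dmat: "mtrace (dmat n d) = complex_of_real (\<Sum>i<n. d i)"
  unfolding mtrace_def by (simp add: dmat_def)

lemma dmat_mult: "dmat n d * dmat n e = dmat n (\<lambda>i. d i * e i)"
proof (rule eq_matI)
  fix i j assume "i < dim_row (dmat n (\<lambda>i. d i * e i))" "j < dim_col (dmat n (\<lambda>i. d i * e i))"
  hence ij: "i < n" "j < n" by auto
  have "(dmat n d * dmat n e) $$ (i,j) = (\<Sum>k<n. dmat n d $$ (i,k) * dmat n e $$ (k,j))"
    using ij by (simp add: scalar_prod_def atLeast0LessThan)
  also have "\<dots> = (\<Sum>k<n. if k = i then (if i = j then complex_of_real (d i * e i) else 0) else 0)"
    using ij by (intro sum.cong refl) (auto simp: dmat_def)
  also have "\<dots> = dmat n (\<lambda>i. d i * e i) $$ (i,j)" using ij by (simp add: dmat_def)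
  finally show "(dmat n d * dmat n e) $$ (i,j) = dmat n (\<lambda>i. d i * e i) $$ (i,j)" .
qed auto

lemma hermitian_upper_triangular_diag:
  assumes T: "T \<in> carrier_mat n n" "upper_triangular T" and aT: "adj T = T"
  shows "T = dmat n (\<lambda>i. Re (T $$ (i,i)))"
proof -
  have cnj: "cnj (T $$ (j,i)) = T $$ (i,j)" if "i < n" "j < n" for i j
    using aT adj_index[of i T j] T(1) that by simp
  have low: "T $$ (i,j) = 0" if "i < n" "j < n" "i \<noteq> j" for i j
  proof (cases "j < i")
    case True thus ?thesis using T that unfolding upper_triangular_def by auto
  next
    case False
    hence "T $$ (j,i) = 0" using T that unfolding upper_triangular_def by auto
    thus ?thesis using cnj[OF that(1,2)] by simp
  qed
  have re: "T $$ (i,i) = complex_of_real (Re (T $$ (i,i)))" if "i < n" for i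
    using cnj[OF that that] by (metis Reals_cnj_iff complex_is_Real_iff of_real_Re)
  show ?thesis by (rule eq_matI) (use T(1) low re in \<open>auto simp: dmat_def\<close>)
qed

lemma hermitian_spectral:
  assumes H: "hermitian n A"
  shows "\<exists>U d. unitary n U \<and> A = U * dmat n d * adj U"
proof -
  have A: "A \<in> carrier_mat n n" and aA: "adj A = A" using H unfolding hermitian_def by auto
  obtain U T where U: "unitary n U" and T: "T \<in> carrier_mat n n" "upper_triangular T" "A = U * T * adj U"
    using unitary_schur[OF A] by auto
  note Uu = unitaryD[OF U]
  have TUc: "T * adj U \<in> carrier_mat n n" using T Uu by auto
  have "adj U * A * U = (adj U * U) * T * (adj U * U)"
  proof -
    have "adj U * A * U = adj U * (U * (T * adj U)) * U" using T(3) assoc_mult_mat[OF Uu(1) T(1) Uu(2)] by simp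
    also have "\<dots> = (adj U * U) * (T * adj U) * U" using assoc_mult_mat[OF Uu(2,1) TUc] by simp
    also have "\<dots> = (adj U * U) * (T * (adj U * U))"
      using assoc_mult_mat[OF mult_carrier_mat[OF Uu(2,1)] TUc Uu(1)] assoc_mult_mat[OF T(1) Uu(2,1)] by simp
    finally show ?thesis using Uu T(1) by simp
  qed
  hence Teq: "T = adj U * A * U" using Uu T(1) by simp
  have "adj T = T" unfolding Teq using adj_mult[OF mult_carrier_mat[OF Uu(2) A] Uu(1)] adj_mult[OF Uu(2) A] aA
    assoc_mult_mat[OF Uu(2) A Uu(1)] by simp
  then show ?thesis using hermitian_upper_triangular_diag[OF T(1,2)] U T(3) by metis
qed

lemma udu_index: assumes "U \<in> carrier_mat n n" "i < n" "j < n"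
  shows "(U * dmat n d * adj U) $$ (i,j) = (\<Sum>k<n. U $$ (i,k) * complex_of_real (d k) * cnj (U $$ (j,k)))"
proof -
  have "(U * dmat n d * adj U) $$ (i,j) = (\<Sum>l<n. (U * dmat n d) $$ (i,l) * cnj (U $$ (j,l)))"
    using assms by (simp add: scalar_prod_def row_def col_def atLeast0LessThan)
  also have "\<dots> = (\<Sum>l<n. U $$ (i,l) * complex_of_real (d l) * cnj (U $$ (j,l)))"
  proof (rule sum.cong)
    fix l assume l: "l \<in> {..<n}"
    have "(U * dmat n d) $$ (i,l) = (\<Sum>k<n. U $$ (i,k) * dmat n d $$ (k,l))"
      using assms l by (simp add: scalar_prod_def row_def col_def atLeast0LessThan)
    also have "\<dots> = U $$ (i,l) * complex_of_real (d l)"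
      using l by (simp add: dmat_def if_distrib cong: if_cong)
    finally show "(U * dmat n d) $$ (i,l) * cnj (U $$ (j,l)) = U $$ (i,l) * complex_of_real (d l) * cnj (U $$ (j,l))"
      by simp
  qed simp
  finally show ?thesis .
qed

lemma unitary_cols: assumes "unitary n U" "k < n" "l < n"
  shows "(\<Sum>i<n. cnj (U $$ (i,k)) * U $$ (i,l)) = (if k = l then 1 else 0)"
proof -
  note Uu = unitaryD[OF assms(1)]
  have "(\<Sum>i<n. cnj (U $$ (i,k)) * U $$ (i,l)) = (adj U * U) $$ (k,l)"
    using mat_mult_index_sum[OF Uu(2,1) assms(2,3)] Uu(1) assms by simp
  thus ?thesis using Uu assms by simp
qed

lemma hermitian_udu: assumes "U \<in> carrier_mat n n" shows "hermitian n (U * dmat n d * adj U)"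
proof -
  have "adj (U * dmat n d * adj U) = adj (adj U) * adj (U * dmat n d)"
    using adj_mult[OF mult_carrier_mat[OF assms dmat_carrier] adj_carrier[OF assms]] .
  also have "\<dots> = U * (dmat n d * adj U)" using adj_mult[OF assms dmat_carrier] by simp
  also have "\<dots> = U * dmat n d * adj U" using assoc_mult_mat[OF assms dmat_carrier adj_carrier[OF assms]] by simp
  finally show ?thesis unfolding hermitian_def using assms by auto
qed

lemma mtrace_udu: assumes U: "unitary n U"
  shows "mtrace (U * dmat n d * adj U) = complex_of_real (\<Sum>k<n. d k)"
proof -
  note Uu = unitaryD[OF U]
  have "mtrace (U * dmat n d * adj U) = (\<Sum>i<n. \<Sum>k<n. U $$ (i,k) * complex_of_real (d k) * cnj (U $$ (i,k)))"
  proof -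
    have dr: "dim_row (U * dmat n d * adj U) = n" using Uu(1) by simp
    have "mtrace (U * dmat n d * adj U) = (\<Sum>i<n. (U * dmat n d * adj U) $$ (i,i))"
      by (simp only: mtrace_def dr)
    also have "\<dots> = (\<Sum>i<n. \<Sum>k<n. U $$ (i,k) * complex_of_real (d k) * cnj (U $$ (i,k)))"
      by (rule sum.cong[OF refl], rule udu_index[OF Uu(1)]) auto
    finally show ?thesis .
  qed
  also have "\<dots> = (\<Sum>k<n. complex_of_real (d k) * (\<Sum>i<n. cnj (U $$ (i,k)) * U $$ (i,k)))"
    by (subst sum.swap) (simp add: sum_distrib_left mult_ac)
  also have "\<dots> = (\<Sum>k<n. complex_of_real (d k))"
    by (intro sum.cong refl) (simp add: unitary_cols[OF U])
  finally show ?thesis by simp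
qed

definition qf :: "nat \<Rightarrow> complex mat \<Rightarrow> (nat \<Rightarrow> complex) \<Rightarrow> complex" where
  "qf n A v = (\<Sum>i<n. \<Sum>j<n. cnj (v i) * A $$ (i,j) * v j)"

lemma psd_qf: "psd n A \<Longrightarrow> 0 \<le> Re (qf n A v)"
  unfolding psd_def qf_def by blast

lemma qf_udu: assumes "U \<in> carrier_mat n n"
  shows "qf n (U * dmat n d * adj U) v =
     (\<Sum>k<n. complex_of_real (d k) * ((\<Sum>i<n. cnj (v i) * U $$ (i,k)) * cnj (\<Sum>i<n. cnj (v i) * U $$ (i,k))))"
proof -
  have "qf n (U * dmat n d * adj U) v
      = (\<Sum>i<n. \<Sum>j<n. \<Sum>k<n. cnj (v i) * U $$ (i,k) * complex_of_real (d k) * cnj (U $$ (j,k)) * v j)"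
    unfolding qf_def
    by (intro sum.cong refl) (simp add: udu_index[OF assms] sum_distrib_left sum_distrib_right mult_ac)
  also have "\<dots> = (\<Sum>k<n. \<Sum>i<n. \<Sum>j<n. cnj (v i) * U $$ (i,k) * complex_of_real (d k) * cnj (U $$ (j,k)) * v j)"
    by (subst sum.swap, rule sum.cong[OF refl], rule sum.swap)
  also have "\<dots> = (\<Sum>k<n. complex_of_real (d k) * ((\<Sum>i<n. cnj (v i) * U $$ (i,k)) * cnj (\<Sum>i<n. cnj (v i) * U $$ (i,k))))"
    by (simp add: sum_distrib_left sum_distrib_right mult_ac)
  finally show ?thesis .
qed

lemma psd_udu: assumes U: "U \<in> carrier_mat n n" and d: "\<And>k. k < n \<Longrightarrow> d k \<ge> 0"
  shows "psd n (U * dmat n d * adj U)"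
  unfolding psd_def
proof (intro conjI allI)
  show "hermitian n (U * dmat n d * adj U)" using hermitian_udu[OF U] .
  fix v :: "nat \<Rightarrow> complex"
  define w where "w k = (\<Sum>i<n. cnj (v i) * U $$ (i,k))" for k
  have "Re (qf n (U * dmat n d * adj U) v) = (\<Sum>k<n. d k * (cmod (w k))^2)"
    unfolding qf_udu[OF U] w_def[symmetric] by (simp add: complex_mult_cnj cmod_power2 flip: of_real_mult)
  also have "\<dots> \<ge> 0" using d by (intro sum_nonneg) auto
  finally show "0 \<le> Re (\<Sum>i<n. \<Sum>j<n. cnj (v i) * (U * dmat n d * adj U) $$ (i, j) * v j)"
    unfolding qf_def .
qed

lemma psd_dmat: assumes "\<And>k. k < n \<Longrightarrow> d k \<ge> 0" shows "psd n (dmat n d)"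
  using psd_udu[OF one_carrier_mat[of n] assms] by simp

text \<open>... and conversely, since the quadratic form at the k-th eigenvector is the k-th eigenvalue.\<close>
lemma qf_col_udu: assumes U: "unitary n U" and k: "k < n"
  shows "qf n (U * dmat n d * adj U) (\<lambda>i. U $$ (i,k)) = complex_of_real (d k)"
proof -
  have "qf n (U * dmat n d * adj U) (\<lambda>i. U $$ (i,k)) =
      (\<Sum>l<n. complex_of_real (d l) * ((if k = l then 1 else 0) * cnj (if k = l then 1 else 0)))"
    unfolding qf_udu[OF unitaryD(1)[OF U]] by (intro sum.cong refl) (simp add: unitary_cols[OF U k])
  also have "\<dots> = complex_of_real (d k)" using k by (simp add: if_distrib cong: if_cong)
  finally show ?thesis .
qed

lemma psd_spectral: assumes "psd n A"
  shows "\<exists>U d. unitary n U \<and> (\<forall>k<n. d k \<ge> 0) \<and> A = U * dmat n d * adj U"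
proof -
  obtain U d where U: "unitary n U" "A = U * dmat n d * adj U"
    using hermitian_spectral assms unfolding psd_def by blast
  have "d k \<ge> 0" if k: "k < n" for k
    using psd_qf[OF assms, of "\<lambda>i. U $$ (i,k)"] qf_col_udu[OF U(1) k, of d] U(2) by simp
  thus ?thesis using U by blast
qed

lemma mtrace_mult: assumes "A \<in> carrier_mat n m" "B \<in> carrier_mat m n"
  shows "mtrace (A * B) = (\<Sum>i<n. \<Sum>j<m. A $$ (i,j) * B $$ (j,i))"
  unfolding mtrace_def using assms by (intro sum.cong) (auto simp: scalar_prod_def atLeast0LessThan)

lemma qf_hermitian_real: assumes "hermitian n K" shows "cnj (qf n K v) = qf n K v"
proof -
  have K: "K \<in> carrier_mat n n" "adj K = K" using assms unfolding hermitian_def by auto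
  have e: "cnj (K $$ (i,j)) = K $$ (j,i)" if "i < n" "j < n" for i j
    using K that by (metis adj_index carrier_matD)
  have "cnj (qf n K v) = (\<Sum>i<n. \<Sum>j<n. v i * K $$ (j,i) * cnj (v j))"
    unfolding qf_def by (simp add: e)
  also have "\<dots> = qf n K v" unfolding qf_def by (subst sum.swap) (simp add: mult_ac)
  finally show ?thesis .
qed

text \<open>Tr(K rho) is a nonnegative real for positive semidefinite K and rho: expanding rho
  spectrally, it is a nonnegative combination of values of the quadratic form of K.\<close>
lemma trace_psd_nonneg: assumes K: "psd n K" and R: "psd n \<rho>"
  shows "\<exists>r \<ge> 0. mtrace (K * \<rho>) = complex_of_real r"
proof -
  obtain U d where U: "unitary n U" "\<forall>k<n. d k \<ge> 0" "\<rho> = U * dmat n d * adj U"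
    using psd_spectral[OF R] by auto
  note Uu = unitaryD[OF U(1)]
  have Kc: "K \<in> carrier_mat n n" using K unfolding psd_def hermitian_def by auto
  have Rc: "\<rho> \<in> carrier_mat n n" using R unfolding psd_def hermitian_def by auto
  define c where "c k = qf n K (\<lambda>i. U $$ (i,k))" for k
  have creal: "c k = complex_of_real (Re (c k))" for k
    using qf_hermitian_real[of n K] K unfolding psd_def c_def by (metis Reals_cnj_iff complex_is_Real_iff of_real_Re)
  have cpos: "Re (c k) \<ge> 0" for k unfolding c_def by (rule psd_qf[OF K])
  have re: "\<rho> $$ (j,i) = (\<Sum>k<n. U $$ (j,k) * complex_of_real (d k) * cnj (U $$ (i,k)))" if "i<n" "j<n" for i j
    unfolding U(3) using udu_index[OF Uu(1) that(2,1)] .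
  have "mtrace (K * \<rho>) = (\<Sum>i<n. \<Sum>j<n. K $$ (i,j) * \<rho> $$ (j,i))" by (rule mtrace_mult[OF Kc Rc])
  also have "\<dots> = (\<Sum>i<n. \<Sum>j<n. K $$ (i,j) * (\<Sum>k<n. U $$ (j,k) * complex_of_real (d k) * cnj (U $$ (i,k))))"
    by (intro sum.cong refl) (simp add: re)
  also have "\<dots> = (\<Sum>i<n. \<Sum>j<n. \<Sum>k<n. complex_of_real (d k) * (cnj (U $$ (i,k)) * K $$ (i,j) * U $$ (j,k)))"
    by (simp add: sum_distrib_left mult_ac)
  also have "\<dots> = (\<Sum>k<n. complex_of_real (d k) * c k)"
    unfolding c_def qf_def
    by (subst sum.swap, subst (2) sum.swap) (simp add: sum_distrib_left mult_ac)
  also have "\<dots> = complex_of_real (\<Sum>k<n. d k * Re (c k))"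
    by (subst creal) (simp flip: of_real_mult)
  finally show ?thesis using U(2) cpos by (intro exI[of _ "\<Sum>k<n. d k * Re (c k)"]) (auto intro!: sum_nonneg)
qed

lemma density_udu: assumes U: "unitary n U" and d: "\<And>k. k < n \<Longrightarrow> d k \<ge> 0" and s: "(\<Sum>k<n. d k) = 1"
  shows "density n (U * dmat n d * adj U)"
  unfolding density_def using psd_udu[OF unitaryD(1)[OF U] d] s mtrace_udu[OF U, of d] by auto

lemma density_carrier: "density n \<rho> \<Longrightarrow> \<rho> \<in> carrier_mat n n"
  unfolding density_def psd_def hermitian_def by auto

section \<open>Trace norm and the Jordan decomposition of a pseudo-state\<close>

lemma udu_mult: assumes U: "unitary n U"
  shows "(U * dmat n d * adj U) * (U * dmat n e * adj U) = U * dmat n (\<lambda>i. d i * e i) * adj U"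
proof -
  note Uu = unitaryD[OF U]
  have Dc: "dmat n d \<in> carrier_mat n n" "dmat n e \<in> carrier_mat n n" by auto
  have EaU: "dmat n e * adj U \<in> carrier_mat n n" using mult_carrier_mat[OF dmat_carrier Uu(2)] .
  have UD: "U * dmat n d \<in> carrier_mat n n" using Uu by auto
  have UEaU: "U * dmat n e * adj U \<in> carrier_mat n n" using Uu by auto
  have "adj U * (U * dmat n e * adj U) = dmat n e * adj U"
  proof -
    have "adj U * (U * dmat n e * adj U) = adj U * (U * (dmat n e * adj U))"
      using assoc_mult_mat[OF Uu(1) Dc(2) Uu(2)] by simp
    also have "\<dots> = (adj U * U) * (dmat n e * adj U)" using assoc_mult_mat[OF Uu(2,1) EaU] by simp
    finally show ?thesis using Uu EaU by simp
  qed
  hence "(U * dmat n d * adj U) * (U * dmat n e * adj U) = U * dmat n d * (dmat n e * adj U)"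
    using assoc_mult_mat[OF UD Uu(2) UEaU] by simp
  also have "\<dots> = U * (dmat n d * (dmat n e * adj U))" using assoc_mult_mat[OF Uu(1) Dc(1) EaU] .
  also have "dmat n d * (dmat n e * adj U) = dmat n (\<lambda>i. d i * e i) * adj U"
    using assoc_mult_mat[OF Dc Uu(2), symmetric] dmat_mult by simp
  also have "U * (dmat n (\<lambda>i. d i * e i) * adj U) = U * dmat n (\<lambda>i. d i * e i) * adj U"
    using assoc_mult_mat[OF Uu(1) dmat_carrier Uu(2)] by simp
  finally show ?thesis .
qed

lemma proots_prod_lin: "proots (\<Prod>a\<leftarrow>xs. [:- a, 1:]) = mset (xs :: complex list)"
proof (induct xs)
  case (Cons a xs)
  have nz: "(\<Prod>a\<leftarrow>xs. [:- a, 1:]) \<noteq> 0" by (auto simp: prod_list_zero_iff)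
  have "proots (\<Prod>a\<leftarrow>a#xs. [:- a, 1:]) = proots ([:- a, 1:] * (\<Prod>a\<leftarrow>xs. [:- a, 1:]))" by simp
  also have "\<dots> = proots [:- a, 1:] + proots (\<Prod>a\<leftarrow>xs. [:- a, 1:])" by (rule proots_mult) (use nz in auto)
  also have "\<dots> = mset (a # xs)" by (simp only: proots_linear_factor Cons) simp
  finally show ?case .
qed simp

text \<open>The trace norm of a Hermitian matrix is the sum of the absolute values of its eigenvalues:
  O^* O has eigenvalues d_k^2, read off from its characteristic polynomial.\<close>
lemma trace_norm_udu: assumes U: "unitary n U"
  shows "trace_norm (U * dmat n d * adj U) = (\<Sum>i<n. \<bar>d i\<bar>)"
proof -
  note Uu = unitaryD[OF U]
  let ?O = "U * dmat n d * adj U"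
  have aO: "adj ?O = ?O" using hermitian_udu[OF Uu(1)] unfolding hermitian_def by simp
  have OO: "adj ?O * ?O = U * dmat n (\<lambda>i. d i * d i) * adj U" unfolding aO udu_mult[OF U] ..
  have sim: "similar_mat (U * dmat n (\<lambda>i. d i * d i) * adj U) (dmat n (\<lambda>i. d i * d i))"
    unfolding similar_mat_def similar_mat_wit_def using Uu
    by (intro exI[of _ U] exI[of _ "adj U"]) (auto simp: Let_def)
  have ut: "upper_triangular (dmat n (\<lambda>i. d i * d i))" unfolding upper_triangular_def dmat_def by auto
  have cp: "char_poly (adj ?O * ?O) = (\<Prod>a\<leftarrow>map (\<lambda>i. complex_of_real (d i * d i)) [0..<n]. [:- a, 1:])"
  proof -
    have "diag_mat (dmat n (\<lambda>i. d i * d i)) = map (\<lambda>i. complex_of_real (d i * d i)) [0..<n]"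
      unfolding diag_mat_def by (intro map_cong) (auto simp: dmat_def)
    thus ?thesis unfolding OO char_poly_similar[OF sim] char_poly_upper_triangular[OF dmat_carrier ut] by simp
  qed
  have "trace_norm ?O = (\<Sum>i\<in>{0..<n}. sqrt (Re (complex_of_real (d i * d i))))"
    unfolding trace_norm_def cp proots_prod_lin sum_unfold_sum_mset
    by (simp add: image_mset.compositionality o_def)
  also have "\<dots> = (\<Sum>i<n. \<bar>d i\<bar>)"
    by (simp add: atLeast0LessThan)
  finally show ?thesis .
qed

text \<open>Jordan decomposition of a real vector with unit sum: it is (1 + t) e1 - t e2 for probability
  vectors e1, e2 (the normalised positive and negative parts), where 1 + 2t is its l1 norm.\<close>
lemma real_jordan_split:
  fixes d :: "nat \<Rightarrow> real"
  assumes sd: "(\<Sum>k<n. d k) = 1"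
  shows "\<exists>t e1 e2. t \<ge> 0 \<and> (\<forall>k. e1 k \<ge> 0 \<and> e2 k \<ge> 0) \<and> (\<Sum>k<n. e1 k) = 1 \<and> (\<Sum>k<n. e2 k) = 1 \<and>
     (\<forall>k<n. d k = (1 + t) * e1 k - t * e2 k) \<and> (\<Sum>k<n. \<bar>d k\<bar>) = 1 + 2 * t"
proof -
  define dp where "dp k = max (d k) 0" for k
  define dm where "dm k = max (- d k) 0" for k
  define t where "t = (\<Sum>k<n. dm k)"
  have t0: "t \<ge> 0" unfolding t_def dm_def by (intro sum_nonneg) auto
  have ddm: "d k = dp k - dm k" and abs: "\<bar>d k\<bar> = dp k + dm k" for k unfolding dp_def dm_def by auto
  have sdp: "(\<Sum>k<n. dp k) = 1 + t" using sd unfolding t_def ddm sum_subtractf by simp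
  define e1 where "e1 k = dp k / (1 + t)" for k
  define e2 where "e2 k = (if t = 0 then e1 k else dm k / t)" for k
  have se1: "(\<Sum>k<n. e1 k) = 1" unfolding e1_def using sdp t0 by (simp add: sum_divide_distrib[symmetric])
  have se2: "(\<Sum>k<n. e2 k) = 1"
  proof (cases "t = 0")
    case True thus ?thesis using se1 unfolding e2_def by simp
  next
    case False thus ?thesis unfolding e2_def by (simp add: sum_divide_distrib[symmetric] t_def[symmetric])
  qed
  have e12: "e1 k \<ge> 0 \<and> e2 k \<ge> 0" for k unfolding e1_def e2_def dp_def dm_def using t0 by auto
  have dk: "d k = (1 + t) * e1 k - t * e2 k" if k: "k < n" for k
  proof (cases "t = 0")
    case True
    have "dm k = 0" using True k unfolding t_def dm_def
      by (subst (asm) sum_nonneg_eq_0_iff) auto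
    thus ?thesis using True ddm[of k] unfolding e1_def e2_def by simp
  next
    case False
    have "1 + t \<noteq> 0" using t0 by simp
    thus ?thesis using False ddm[of k] unfolding e1_def e2_def by simp
  qed
  have "(\<Sum>k<n. \<bar>d k\<bar>) = 1 + 2 * t" using sdp unfolding abs sum.distrib t_def by simp
  then show ?thesis using t0 e12 se1 se2 dk by blast
qed

text \<open>Jordan decomposition of a pseudo-state: O = (1 + t) rho1 - t rho2 with density operators
  rho1, rho2 and ||O||_1 = 1 + 2t (apply the real decomposition to the spectrum of O).\<close>
lemma pseudo_state_jordan:
  assumes Op: "pseudo_state n Op"
  shows "\<exists>t \<rho>1 \<rho>2. t \<ge> 0 \<and> density n \<rho>1 \<and> density n \<rho>2 \<and>
     (\<forall>i<n. \<forall>j<n. Op $$ (i,j) = complex_of_real (1 + t) * \<rho>1 $$ (i,j) - complex_of_real t * \<rho>2 $$ (i,j)) \<and>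
     trace_norm Op = 1 + 2 * t"
proof -
  obtain U d where U: "unitary n U" "Op = U * dmat n d * adj U"
    using hermitian_spectral Op unfolding pseudo_state_def by blast
  note Uu = unitaryD[OF U(1)]
  have "(\<Sum>k<n. d k) = 1"
    using mtrace_udu[OF U(1), of d] Op U(2) unfolding pseudo_state_def by (simp flip: of_real_sum)
  then obtain t e1 e2 where t: "t \<ge> 0" and e: "\<forall>k. e1 k \<ge> 0 \<and> e2 k \<ge> 0" "(\<Sum>k<n. e1 k) = 1"
      "(\<Sum>k<n. e2 k) = 1" and dk: "\<forall>k<n. d k = (1 + t) * e1 k - t * e2 k"
      and abs: "(\<Sum>k<n. \<bar>d k\<bar>) = 1 + 2 * t"
    using real_jordan_split by blast
  define \<rho>1 where "\<rho>1 = U * dmat n e1 * adj U"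
  define \<rho>2 where "\<rho>2 = U * dmat n e2 * adj U"
  have "Op $$ (i,j) = complex_of_real (1 + t) * \<rho>1 $$ (i,j) - complex_of_real t * \<rho>2 $$ (i,j)"
    if ij: "i < n" "j < n" for i j
  proof -
    have "complex_of_real (1 + t) * \<rho>1 $$ (i,j) - complex_of_real t * \<rho>2 $$ (i,j)
      = (\<Sum>k<n. U $$ (i,k) * complex_of_real ((1 + t) * e1 k - t * e2 k) * cnj (U $$ (j,k)))"
      unfolding \<rho>1_def \<rho>2_def udu_index[OF Uu(1) ij] sum_distrib_left sum_subtractf[symmetric]
      by (intro sum.cong refl) (simp add: algebra_simps)
    also have "\<dots> = Op $$ (i,j)" unfolding U(2) udu_index[OF Uu(1) ij] by (intro sum.cong refl) (simp add: dk)
    finally show ?thesis by simp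
  qed
  moreover have "density n \<rho>1" "density n \<rho>2"
    unfolding \<rho>1_def \<rho>2_def using density_udu[OF U(1)] e by auto
  moreover have "trace_norm Op = 1 + 2 * t" using trace_norm_udu[OF U(1), of d] abs U(2) by simp
  ultimately show ?thesis using t by blast
qed

text \<open>Indices I < dA * dB of the product space correspond to pairs (I div dB, I mod dB).\<close>
lemma sum_ivl_shift: "(\<Sum>K\<in>{k..<k+b}. f K) = (\<Sum>l<b. f (k + l))" for k b :: nat
  by (induct b) (auto simp: atLeastLessThanSuc add.commute)

lemma sum_pair: "(\<Sum>K<a*b. f K) = (\<Sum>k<a. \<Sum>l<b. f (k*b + l))" for a b :: nat
proof -
  have "(\<Sum>K<a*b. f K) = (\<Sum>k<a. sum f {k*b..<k*b+b})" by (rule sum.nat_group[symmetric])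
  also have "\<dots> = (\<Sum>k<a. \<Sum>l<b. f (k*b + l))" by (simp add: sum_ivl_shift)
  finally show ?thesis .
qed

lemma kron_carrier[simp]: "kron dA dB A B \<in> carrier_mat (dA*dB) (dA*dB)"
  unfolding kron_def by auto
lemma kron_dims[simp]: "dim_row (kron dA dB A B) = dA*dB" "dim_col (kron dA dB A B) = dA*dB"
  unfolding kron_def by auto

lemma kron_index: "I < dA*dB \<Longrightarrow> J < dA*dB \<Longrightarrow>
  kron dA dB A B $$ (I,J) = A $$ (I div dB, J div dB) * B $$ (I mod dB, J mod dB)"
  unfolding kron_def by auto

lemma div_mod_bound: fixes I dA dB :: nat assumes "I < dA * dB" shows "I div dB < dA" "I mod dB < dB"
proof -
  have "dB > 0" using assms by (cases dB) auto
  thus "I mod dB < dB" by simp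
  show "I div dB < dA" using assms by (simp add: less_mult_imp_div_less)
qed

lemma pair_index_bound: fixes k l dA dB :: nat assumes "k < dA" "l < dB" shows "k * dB + l < dA * dB"
proof -
  have "k * dB + l < Suc k * dB" using assms by simp
  also have "\<dots> \<le> dA * dB" using assms by (intro mult_right_mono) auto
  finally show ?thesis .
qed

lemma kron_mult: assumes "A \<in> carrier_mat dA dA" "C \<in> carrier_mat dA dA" "B \<in> carrier_mat dB dB" "D \<in> carrier_mat dB dB"
  shows "kron dA dB A B * kron dA dB C D = kron dA dB (A * C) (B * D)"
proof (rule eq_matI)
  fix I J assume "I < dim_row (kron dA dB (A * C) (B * D))" "J < dim_col (kron dA dB (A * C) (B * D))"
  hence IJ: "I < dA*dB" "J < dA*dB" by auto
  note b = div_mod_bound[OF IJ(1)] div_mod_bound[OF IJ(2)]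
  have "(kron dA dB A B * kron dA dB C D) $$ (I,J) = (\<Sum>K<dA*dB. kron dA dB A B $$ (I,K) * kron dA dB C D $$ (K,J))"
    using IJ by (simp add: scalar_prod_def atLeast0LessThan)
  also have "\<dots> = (\<Sum>k<dA. \<Sum>l<dB. A $$ (I div dB, k) * B $$ (I mod dB, l) * (C $$ (k, J div dB) * D $$ (l, J mod dB)))"
  proof -
    show ?thesis unfolding sum_pair using IJ pair_index_bound by (intro sum.cong refl) (simp add: kron_index)
  qed
  also have "\<dots> = (A * C) $$ (I div dB, J div dB) * (B * D) $$ (I mod dB, J mod dB)"
    using assms b by (simp add: scalar_prod_def atLeast0LessThan sum_product mult_ac)
  also have "\<dots> = kron dA dB (A * C) (B * D) $$ (I,J)" using IJ by (simp add: kron_index)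
  finally show "(kron dA dB A B * kron dA dB C D) $$ (I,J) = kron dA dB (A * C) (B * D) $$ (I,J)" .
qed auto

lemma adj_kron: assumes "A \<in> carrier_mat dA dA" "B \<in> carrier_mat dB dB"
  shows "adj (kron dA dB A B) = kron dA dB (adj A) (adj B)"
proof (rule eq_matI)
  fix I J assume "I < dim_row (kron dA dB (adj A) (adj B))" "J < dim_col (kron dA dB (adj A) (adj B))"
  hence IJ: "I < dA*dB" "J < dA*dB" by auto
  note b = div_mod_bound[OF IJ(1)] div_mod_bound[OF IJ(2)]
  show "adj (kron dA dB A B) $$ (I, J) = kron dA dB (adj A) (adj B) $$ (I, J)"
    using IJ b assms by (simp add: kron_index)
qed auto

lemma kron_dmat: "kron dA dB (dmat dA d) (dmat dB e) = dmat (dA*dB) (\<lambda>I. d (I div dB) * e (I mod dB))"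
proof (rule eq_matI)
  fix I J assume "I < dim_row (dmat (dA*dB) (\<lambda>I. d (I div dB) * e (I mod dB)))"
    "J < dim_col (dmat (dA*dB) (\<lambda>I. d (I div dB) * e (I mod dB)))"
  hence IJ: "I < dA*dB" "J < dA*dB" by auto
  note b = div_mod_bound[OF IJ(1)] div_mod_bound[OF IJ(2)]
  have "(I div dB = J div dB \<and> I mod dB = J mod dB) = (I = J)"
    by (metis div_mult_mod_eq)
  thus "kron dA dB (dmat dA d) (dmat dB e) $$ (I,J) = dmat (dA*dB) (\<lambda>I. d (I div dB) * e (I mod dB)) $$ (I,J)"
    using IJ b by (auto simp: kron_index dmat_def)
qed auto

lemma kron_udu: assumes U: "U \<in> carrier_mat dA dA" and V: "V \<in> carrier_mat dB dB"
  shows "kron dA dB (U * dmat dA d * adj U) (V * dmat dB e * adj V)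
     = kron dA dB U V * dmat (dA*dB) (\<lambda>I. d (I div dB) * e (I mod dB)) * adj (kron dA dB U V)"
proof -
  have "kron dA dB (U * dmat dA d * adj U) (V * dmat dB e * adj V) = kron dA dB (U * dmat dA d) (V * dmat dB e) * kron dA dB (adj U) (adj V)"
    using U V by (simp add: kron_mult)
  also have "kron dA dB (U * dmat dA d) (V * dmat dB e) = kron dA dB U V * kron dA dB (dmat dA d) (dmat dB e)"
    using U V by (simp add: kron_mult)
  finally show ?thesis using U V by (simp add: kron_dmat adj_kron)
qed

lemma psd_kron: assumes "psd dA M" "psd dB N" shows "psd (dA*dB) (kron dA dB M N)"
proof -
  obtain U d where U: "unitary dA U" "\<forall>k<dA. d k \<ge> 0" "M = U * dmat dA d * adj U" using psd_spectral[OF assms(1)] by auto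
  obtain V e where V: "unitary dB V" "\<forall>k<dB. e k \<ge> 0" "N = V * dmat dB e * adj V" using psd_spectral[OF assms(2)] by auto
  have Uc: "U \<in> carrier_mat dA dA" and Vc: "V \<in> carrier_mat dB dB" using U V unfolding unitary_def by auto
  show ?thesis unfolding U(3) V(3) kron_udu[OF Uc Vc]
    by (rule psd_udu) (use U V div_mod_bound in auto)
qed

lemma kron_one: "kron dA dB (1\<^sub>m dA) (1\<^sub>m dB) = 1\<^sub>m (dA * dB)"
proof (rule eq_matI)
  fix I J assume "I < dim_row (1\<^sub>m (dA * dB))" "J < dim_col (1\<^sub>m (dA * dB))"
  hence IJ: "I < dA * dB" "J < dA * dB" by auto
  have "(I div dB = J div dB \<and> I mod dB = J mod dB) = (I = J)" by (metis div_mult_mod_eq)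
  then show "kron dA dB (1\<^sub>m dA) (1\<^sub>m dB) $$ (I, J) = 1\<^sub>m (dA * dB) $$ (I, J)"
    using IJ div_mod_bound[OF IJ(1)] div_mod_bound[OF IJ(2)] by (auto simp: kron_index)
qed auto

lemma mtrace_kron: assumes "\<rho> \<in> carrier_mat (dA*dB) (dA*dB)"
  shows "mtrace (kron dA dB A B * \<rho>) =
    (\<Sum>I<dA*dB. \<Sum>J<dA*dB. A $$ (I div dB, J div dB) * B $$ (I mod dB, J mod dB) * \<rho> $$ (J,I))"
  unfolding mtrace_mult[OF kron_carrier assms] by (intro sum.cong refl) (simp add: kron_index)

section \<open>The Born rule: quantum boxes\<close>

lemma povm_sum: assumes "povm d M" "i < d" "j < d"
  shows "(\<Sum>a\<in>UNIV. M x a $$ (i,j)) = 1\<^sub>m d $$ (i,j)"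
  using assms unfolding povm_def by auto

text \<open>Summing over the outcomes of one party's POVM replaces its effect by the identity; this
  is the mechanism behind no-signalling of quantum boxes.\<close>
lemma trace_kron_povm_left:
  assumes M: "povm dA M" and R: "\<rho> \<in> carrier_mat (dA*dB) (dA*dB)"
  shows "(\<Sum>a\<in>UNIV. mtrace (kron dA dB (M x a) B * \<rho>)) = mtrace (kron dA dB (1\<^sub>m dA) B * \<rho>)"
proof -
  have "(\<Sum>a\<in>UNIV. mtrace (kron dA dB (M x a) B * \<rho>)) =
     (\<Sum>I<dA*dB. \<Sum>J<dA*dB. (\<Sum>a\<in>UNIV. M x a $$ (I div dB, J div dB)) * B $$ (I mod dB, J mod dB) * \<rho> $$ (J,I))"
    unfolding mtrace_kron[OF R] sum_distrib_right
    by (subst sum.swap, rule sum.cong[OF refl], subst sum.swap, rule refl)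
  also have "\<dots> = mtrace (kron dA dB (1\<^sub>m dA) B * \<rho>)"
    unfolding mtrace_kron[OF R] by (intro sum.cong refl) (simp add: povm_sum[OF M] div_mod_bound)
  finally show ?thesis .
qed

lemma trace_kron_povm_right:
  assumes N: "povm dB N" and R: "\<rho> \<in> carrier_mat (dA*dB) (dA*dB)"
  shows "(\<Sum>b\<in>UNIV. mtrace (kron dA dB A (N y b) * \<rho>)) = mtrace (kron dA dB A (1\<^sub>m dB) * \<rho>)"
proof -
  have "(\<Sum>b\<in>UNIV. mtrace (kron dA dB A (N y b) * \<rho>)) =
     (\<Sum>I<dA*dB. \<Sum>J<dA*dB. A $$ (I div dB, J div dB) * (\<Sum>b\<in>UNIV. N y b $$ (I mod dB, J mod dB)) * \<rho> $$ (J,I))"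
    unfolding mtrace_kron[OF R] sum_distrib_right sum_distrib_left
    by (subst sum.swap, rule sum.cong[OF refl], subst sum.swap, rule refl)
  also have "\<dots> = mtrace (kron dA dB A (1\<^sub>m dB) * \<rho>)"
    unfolding mtrace_kron[OF R] by (intro sum.cong refl) (simp add: povm_sum[OF N] div_mod_bound)
  finally show ?thesis .
qed

lemma born_box:
  assumes M: "povm dA M" and N: "povm dB N" and R: "density (dA*dB) \<rho>"
  defines "q \<equiv> (\<lambda>a b x y. Re (mtrace (kron dA dB (M x a) (N y b) * \<rho>)))"
  shows "\<forall>a b x y. complex_of_real (q a b x y) = mtrace (kron dA dB (M x a) (N y b) * \<rho>)"
    and "no_signalling q" and "quantum_box q"
proof -
  have Rc: "\<rho> \<in> carrier_mat (dA*dB) (dA*dB)" by (rule density_carrier[OF R])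
  have real: "complex_of_real (q a b x y) = mtrace (kron dA dB (M x a) (N y b) * \<rho>) \<and> q a b x y \<ge> 0"
    for a b x y
  proof -
    have "psd dA (M x a)" "psd dB (N y b)" using M N unfolding povm_def by auto
    from trace_psd_nonneg[OF psd_kron[OF this]] R obtain r where
      "r \<ge> 0" "mtrace (kron dA dB (M x a) (N y b) * \<rho>) = complex_of_real r"
      unfolding density_def by auto
    thus ?thesis unfolding q_def by simp
  qed
  thus born: "\<forall>a b x y. complex_of_real (q a b x y) = mtrace (kron dA dB (M x a) (N y b) * \<rho>)" by blast
  have marg_A: "(\<Sum>b\<in>UNIV. q a b x y) = Re (mtrace (kron dA dB (M x a) (1\<^sub>m dB) * \<rho>))" for a x y
    unfolding q_def Re_sum[symmetric] trace_kron_povm_right[OF N Rc] ..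
  have marg_B: "(\<Sum>a\<in>UNIV. q a b x y) = Re (mtrace (kron dA dB (1\<^sub>m dA) (N y b) * \<rho>))" for b x y
    unfolding q_def Re_sum[symmetric] trace_kron_povm_left[OF M Rc] ..
  have "(\<Sum>a\<in>UNIV. \<Sum>b\<in>UNIV. q a b x y) = Re (mtrace (kron dA dB (1\<^sub>m dA) (1\<^sub>m dB) * \<rho>))" for x y
    unfolding marg_A Re_sum[symmetric] trace_kron_povm_left[OF M Rc] ..
  also have "\<dots> = 1" using R Rc unfolding kron_one density_def by simp
  finally show "no_signalling q" unfolding no_signalling_def using real marg_A marg_B by auto
  show "quantum_box q" unfolding quantum_box_def realizes_def using R M N born by blast
qed

lemma quantum_box_no_signalling: assumes "quantum_box q" shows "no_signalling q"
proof -
  obtain dA dB \<rho> M N where R: "density (dA * dB) \<rho>" and M: "povm dA M" and N: "povm dB N"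
    and e: "\<forall>a b x y. complex_of_real (q a b x y) = mtrace (kron dA dB (M x a) (N y b) * \<rho>)"
    using assms unfolding quantum_box_def realizes_def by blast
  have "q = (\<lambda>a b x y. Re (mtrace (kron dA dB (M x a) (N y b) * \<rho>)))"
    using e by (intro ext) (metis Re_complex_of_real)
  thus ?thesis using born_box(2)[OF M N R] by simp
qed

lemma realizes_split:
  assumes re: "realizes dA dB Op p" and Opc: "Op \<in> carrier_mat (dA*dB) (dA*dB)"
    and R1: "density (dA*dB) \<rho>1" and R2: "density (dA*dB) \<rho>2"
    and eq: "\<forall>i<dA*dB. \<forall>j<dA*dB. Op $$ (i,j) = complex_of_real (1 + t) * \<rho>1 $$ (i,j) - complex_of_real t * \<rho>2 $$ (i,j)"
  shows "\<exists>q1 q2. quantum_box q1 \<and> quantum_box q2 \<and>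
     (\<forall>a b x y. p a b x y = (1 + t) * q1 a b x y - t * q2 a b x y)"
proof -
  obtain M N where M: "povm dA M" and N: "povm dB N"
    and pe: "\<forall>a b x y. complex_of_real (p a b x y) = mtrace (kron dA dB (M x a) (N y b) * Op)"
    using re unfolding realizes_def by auto
  define q1 where "q1 = (\<lambda>a b x y. Re (mtrace (kron dA dB (M x a) (N y b) * \<rho>1)))"
  define q2 where "q2 = (\<lambda>a b x y. Re (mtrace (kron dA dB (M x a) (N y b) * \<rho>2)))"
  have "p a b x y = (1 + t) * q1 a b x y - t * q2 a b x y" for a b x y
  proof -
    let ?K = "kron dA dB (M x a) (N y b)"
    have q1: "complex_of_real (q1 a b x y) = mtrace (?K * \<rho>1)"
      unfolding q1_def using born_box(1)[OF M N R1] by blast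
    have q2: "complex_of_real (q2 a b x y) = mtrace (?K * \<rho>2)"
      unfolding q2_def using born_box(1)[OF M N R2] by blast
    have "complex_of_real (p a b x y) = (\<Sum>I<dA*dB. \<Sum>J<dA*dB. ?K $$ (I,J) * Op $$ (J,I))"
      using pe mtrace_mult[OF kron_carrier Opc] by simp
    also have "\<dots> = complex_of_real (1 + t) * (\<Sum>I<dA*dB. \<Sum>J<dA*dB. ?K $$ (I,J) * \<rho>1 $$ (J,I))
        - complex_of_real t * (\<Sum>I<dA*dB. \<Sum>J<dA*dB. ?K $$ (I,J) * \<rho>2 $$ (J,I))"
      unfolding sum_distrib_left sum_subtractf[symmetric]
      by (intro sum.cong refl) (simp add: eq algebra_simps)
    also have "\<dots> = complex_of_real ((1 + t) * q1 a b x y - t * q2 a b x y)"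
      unfolding of_real_diff of_real_mult q1 q2 mtrace_mult[OF kron_carrier density_carrier[OF R1]]
        mtrace_mult[OF kron_carrier density_carrier[OF R2]] by simp
    finally show ?thesis using of_real_eq_iff by blast
  qed
  moreover have "quantum_box q1" "quantum_box q2"
    unfolding q1_def q2_def using born_box(3)[OF M N R1] born_box(3)[OF M N R2] by blast+
  ultimately show ?thesis by blast
qed

section \<open>No-signalling boxes as affine combinations of local boxes\<close>

text \<open>A pinned conditional distribution of v given u: deterministic (v = v0) on the input u0
  and uniform on every other input.  Products of two of them are local boxes, and every
  no-signalling box is an explicit affine combination of such products.\<close>
definition pinned_dist :: "'u \<Rightarrow> 'v \<Rightarrow> 'u \<Rightarrow> 'v::finite \<Rightarrow> real" where
  "pinned_dist u0 v0 u v = (if u = u0 then (if v = v0 then 1 else 0) else 1 / real (card (UNIV :: 'v set)))"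

lemma card_UNIV_pos: "real (card (UNIV :: 'v::finite set)) > 0"
  by (simp add: card_gt_0_iff)

lemma pinned_dist_nonneg: "pinned_dist u0 v0 u v \<ge> 0"
  unfolding pinned_dist_def by auto

lemma pinned_dist_sum: "(\<Sum>v\<in>UNIV. pinned_dist u0 v0 u (v::'v::finite)) = 1"
  unfolding pinned_dist_def using card_UNIV_pos[where 'v='v] by (cases "u = u0") simp_all

lemma cond_dist_pinned: "cond_dist (\<lambda>u v. pinned_dist u0 v0 u (v::'v::finite))"
  unfolding cond_dist_def using pinned_dist_nonneg pinned_dist_sum by auto

lemma pinned_dist_average: fixes \<phi> :: "'u::finite \<Rightarrow> 'v::finite \<Rightarrow> real"
  shows "(\<Sum>u0\<in>UNIV. \<Sum>v0\<in>UNIV. \<phi> u0 v0 * pinned_dist u0 v0 u v) =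
    \<phi> u v + (1 / real (card (UNIV :: 'v set))) * ((\<Sum>u0\<in>UNIV. \<Sum>v0\<in>UNIV. \<phi> u0 v0) - (\<Sum>v0\<in>UNIV. \<phi> u v0))"
proof -
  define F where "F u0 = (\<Sum>v0\<in>UNIV. \<phi> u0 v0 * pinned_dist u0 v0 u v)" for u0
  define G where "G u0 = (\<Sum>v0\<in>UNIV. \<phi> u0 v0)" for u0
  have "\<phi> u v0 * pinned_dist u v0 u v = (if v0 = v then \<phi> u v else 0)" for v0
    unfolding pinned_dist_def by auto
  hence Fu: "F u = \<phi> u v" unfolding F_def by simp
  have Fo: "F u0 = G u0 / real (card (UNIV :: 'v set))" if "u0 \<noteq> u" for u0
    using that unfolding F_def G_def pinned_dist_def by (simp add: sum_divide_distrib)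
  have "(\<Sum>u0\<in>UNIV. F u0) = F u + (\<Sum>u0\<in>UNIV - {u}. F u0)" by (simp add: sum.remove)
  also have "(\<Sum>u0\<in>UNIV - {u}. F u0) = (\<Sum>u0\<in>UNIV - {u}. G u0 / real (card (UNIV :: 'v set)))"
    by (intro sum.cong) (auto simp: Fo)
  also have "\<dots> = ((\<Sum>u0\<in>UNIV. G u0) - G u) / real (card (UNIV :: 'v set))"
    by (simp add: sum_divide_distrib[symmetric] sum_diff1)
  finally show ?thesis unfolding F_def[symmetric] G_def[symmetric] Fu by simp
qed

text \<open>Marginals of a box (for a no-signalling box they do not depend on the other party's input).\<close>
definition marginal_A :: "('a::finite \<Rightarrow> 'b::finite \<Rightarrow> 'x \<Rightarrow> 'y \<Rightarrow> real) \<Rightarrow> 'a \<Rightarrow> 'x \<Rightarrow> real" where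
  "marginal_A p a x = (\<Sum>b\<in>UNIV. p a b x undefined)"
definition marginal_B :: "('a::finite \<Rightarrow> 'b::finite \<Rightarrow> 'x \<Rightarrow> 'y \<Rightarrow> real) \<Rightarrow> 'b \<Rightarrow> 'y \<Rightarrow> real" where
  "marginal_B p b y = (\<Sum>a\<in>UNIV. p a b undefined y)"

lemma ns_marginal_A: "no_signalling p \<Longrightarrow> (\<Sum>b\<in>UNIV. p a b x y) = marginal_A p a x"
  unfolding no_signalling_def marginal_A_def by metis
lemma ns_marginal_B: "no_signalling p \<Longrightarrow> (\<Sum>a\<in>UNIV. p a b x y) = marginal_B p b y"
  unfolding no_signalling_def marginal_B_def by metis
lemma sum_marginal_A: "no_signalling p \<Longrightarrow> (\<Sum>a\<in>UNIV. marginal_A p a x) = 1"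
  unfolding marginal_A_def no_signalling_def by simp
lemma sum_marginal_B: "no_signalling p \<Longrightarrow> (\<Sum>b\<in>UNIV. marginal_B p b y) = 1"
  unfolding marginal_B_def no_signalling_def by (subst sum.swap) simp

definition shift :: "'u::finite itself \<Rightarrow> 'v::finite itself \<Rightarrow> real" where
  "shift U V = (real (card (UNIV :: 'u set)) - 1) / (real (card (UNIV :: 'u set)) * real (card (UNIV :: 'v set)))"

lemma shift_bounds: "0 \<le> shift TYPE('u::finite) TYPE('v::finite)" "shift TYPE('u) TYPE('v) \<le> 1"
proof -
  have c: "real (card (UNIV :: 'u set)) \<ge> 1" "real (card (UNIV :: 'v set)) \<ge> 1"
    using card_UNIV_pos[where 'v='u] card_UNIV_pos[where 'v='v] by (simp_all add: Suc_le_eq)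
  then have "real (card (UNIV :: 'u set)) - 1 \<le> real (card (UNIV :: 'u set)) * real (card (UNIV :: 'v set))"
    by (smt (verit) mult_le_cancel_left1)
  then show "0 \<le> shift TYPE('u) TYPE('v)" "shift TYPE('u) TYPE('v) \<le> 1"
    using c unfolding shift_def by (auto simp: divide_le_eq)
qed

text \<open>The coefficient of the product of pinned distributions (x0,a0), (y0,b0) in the decomposition.\<close>
definition ns_coeff :: "('a::finite \<Rightarrow> 'b::finite \<Rightarrow> 'x::finite \<Rightarrow> 'y::finite \<Rightarrow> real) \<Rightarrow> 'x \<Rightarrow> 'a \<Rightarrow> 'y \<Rightarrow> 'b \<Rightarrow> real" where
  "ns_coeff p x0 a0 y0 b0 = p a0 b0 x0 y0 - shift TYPE('y) TYPE('b) * marginal_A p a0 x0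
     - shift TYPE('x) TYPE('a) * marginal_B p b0 y0 + shift TYPE('y) TYPE('b) * shift TYPE('x) TYPE('a)"

text \<open>Averaging over Bob's pinned distributions removes Bob's part of the correction ...\<close>
lemma ns_coeff_average_B: fixes p :: "'a::finite \<Rightarrow> 'b::finite \<Rightarrow> 'x::finite \<Rightarrow> 'y::finite \<Rightarrow> real"
  assumes ns: "no_signalling p"
  shows "(\<Sum>y0\<in>UNIV. \<Sum>b0\<in>UNIV. ns_coeff p x0 a0 y0 b0 * pinned_dist y0 b0 y b)
    = p a0 b x0 y - shift TYPE('x) TYPE('a) * marginal_B p b y"
proof -
  define nB where "nB = real (card (UNIV :: 'b set))"
  define nY where "nY = real (card (UNIV :: 'y set))"
  have nB: "nB > 0" and nY: "nY > 0" unfolding nB_def nY_def by (rule card_UNIV_pos)+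
  define R where "R = marginal_A p a0 x0 - nB * shift TYPE('y) TYPE('b) * marginal_A p a0 x0
    - shift TYPE('x) TYPE('a) + nB * shift TYPE('y) TYPE('b) * shift TYPE('x) TYPE('a)"
  have row: "(\<Sum>b0\<in>UNIV. ns_coeff p x0 a0 y0 b0) = R" for y0
    unfolding ns_coeff_def R_def nB_def
    by (simp add: sum.distrib sum_subtractf sum_distrib_left[symmetric] ns_marginal_A[OF ns] sum_marginal_B[OF ns])
  have "(\<Sum>y0\<in>UNIV. \<Sum>b0\<in>UNIV. ns_coeff p x0 a0 y0 b0 * pinned_dist y0 b0 y b)
      = ns_coeff p x0 a0 y b + (1 / nB) * (nY * R - R)"
    unfolding pinned_dist_average row by (simp add: nB_def nY_def)
  also have "\<dots> = p a0 b x0 y - shift TYPE('x) TYPE('a) * marginal_B p b y"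
    unfolding ns_coeff_def R_def shift_def nB_def[symmetric] nY_def[symmetric] using nB nY
    by (simp add: field_simps)
  finally show ?thesis .
qed

text \<open>... and averaging the result over Alice's pinned distributions gives back the box.\<close>
lemma ns_coeff_average_A: fixes p :: "'a::finite \<Rightarrow> 'b::finite \<Rightarrow> 'x::finite \<Rightarrow> 'y::finite \<Rightarrow> real"
  assumes ns: "no_signalling p"
  shows "(\<Sum>x0\<in>UNIV. \<Sum>a0\<in>UNIV. (p a0 b x0 y - shift TYPE('x) TYPE('a) * marginal_B p b y)
     * pinned_dist x0 a0 x a) = p a b x y"
proof -
  define nA where "nA = real (card (UNIV :: 'a set))"
  define nX where "nX = real (card (UNIV :: 'x set))"
  have nA: "nA > 0" and nX: "nX > 0" unfolding nA_def nX_def by (rule card_UNIV_pos)+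
  define R where "R = marginal_B p b y - nA * shift TYPE('x) TYPE('a) * marginal_B p b y"
  have row: "(\<Sum>a0\<in>UNIV. p a0 b x0 y - shift TYPE('x) TYPE('a) * marginal_B p b y) = R" for x0
    unfolding R_def nA_def by (simp add: sum_subtractf ns_marginal_B[OF ns])
  have "(\<Sum>x0\<in>UNIV. \<Sum>a0\<in>UNIV. (p a0 b x0 y - shift TYPE('x) TYPE('a) * marginal_B p b y) * pinned_dist x0 a0 x a)
      = (p a b x y - shift TYPE('x) TYPE('a) * marginal_B p b y) + (1 / nA) * (nX * R - R)"
    unfolding pinned_dist_average row by (simp add: nA_def nX_def)
  also have "\<dots> = p a b x y"
    unfolding R_def shift_def nA_def[symmetric] nX_def[symmetric] using nA nX by (simp add: field_simps)
  finally show ?thesis .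
qed

lemma sum_UNIV_pair: "(\<Sum>z\<in>UNIV. g z) = (\<Sum>u\<in>UNIV. \<Sum>v\<in>UNIV. (g (u,v) :: real))"
  by (simp add: sum.cartesian_product)

definition ns_weight :: "('a::finite \<Rightarrow> 'b::finite \<Rightarrow> 'x::finite \<Rightarrow> 'y::finite \<Rightarrow> real) \<Rightarrow>
    ('x \<times> 'a) \<times> ('y \<times> 'b) \<Rightarrow> real" where
  "ns_weight p z = (case z of ((x0, a0), (y0, b0)) \<Rightarrow> ns_coeff p x0 a0 y0 b0)"

definition pinned_box :: "('x \<times> 'a) \<times> ('y \<times> 'b::finite) \<Rightarrow> 'a::finite \<Rightarrow> 'b \<Rightarrow> 'x \<Rightarrow> 'y \<Rightarrow> real" where
  "pinned_box z a b x y = (case z of ((x0, a0), (y0, b0)) \<Rightarrow> pinned_dist x0 a0 x a * pinned_dist y0 b0 y b)"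

lemma ns_decomp: fixes p :: "'a::finite \<Rightarrow> 'b::finite \<Rightarrow> 'x::finite \<Rightarrow> 'y::finite \<Rightarrow> real"
  assumes ns: "no_signalling p"
  shows "p a b x y = (\<Sum>z\<in>UNIV. ns_weight p z * pinned_box z a b x y)"
proof -
  have "(\<Sum>z\<in>UNIV. ns_weight p z * pinned_box z a b x y)
    = (\<Sum>x0\<in>UNIV. \<Sum>a0\<in>UNIV. \<Sum>y0\<in>UNIV. \<Sum>b0\<in>UNIV. ns_coeff p x0 a0 y0 b0 * (pinned_dist x0 a0 x a * pinned_dist y0 b0 y b))"
    unfolding ns_weight_def pinned_box_def
    by (subst sum_UNIV_pair, subst sum_UNIV_pair, subst sum_UNIV_pair) simp
  also have "\<dots> = (\<Sum>x0\<in>UNIV. \<Sum>a0\<in>UNIV. (\<Sum>y0\<in>UNIV. \<Sum>b0\<in>UNIV. ns_coeff p x0 a0 y0 b0 * pinned_dist y0 b0 y b)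
      * pinned_dist x0 a0 x a)"
    by (simp add: sum_distrib_right sum_distrib_left mult_ac)
  also have "\<dots> = p a b x y" unfolding ns_coeff_average_B[OF ns] ns_coeff_average_A[OF ns] ..
  finally show ?thesis by simp
qed

lemma local_pinned_box: "local_box (pinned_box z)"
proof -
  obtain x0 a0 y0 b0 where z: "z = ((x0, a0), (y0, b0))" by (metis prod.collapse)
  show ?thesis unfolding local_box_def
    by (rule exI[of _ 1], rule exI[of _ "\<lambda>_. 1"], rule exI[of _ "\<lambda>_ x a. pinned_dist x0 a0 x a"],
        rule exI[of _ "\<lambda>_ y b. pinned_dist y0 b0 y b"]) (simp add: cond_dist_pinned pinned_box_def z)
qed

lemma sum_ns_weight: fixes p :: "'a::finite \<Rightarrow> 'b::finite \<Rightarrow> 'x::finite \<Rightarrow> 'y::finite \<Rightarrow> real"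
  assumes ns: "no_signalling p"
  shows "(\<Sum>z\<in>UNIV. ns_weight p z) = 1"
proof -
  have pb: "(\<Sum>a\<in>UNIV. \<Sum>b\<in>UNIV. pinned_box z a b x y) = 1" for z x y
    unfolding pinned_box_def
    by (simp add: case_prod_unfold sum_distrib_left[symmetric] sum_distrib_right[symmetric] pinned_dist_sum)
  have "1 = (\<Sum>a\<in>UNIV. \<Sum>b\<in>UNIV. p a b undefined undefined)" using ns unfolding no_signalling_def by simp
  also have "\<dots> = (\<Sum>a\<in>UNIV. \<Sum>b\<in>UNIV. \<Sum>z\<in>UNIV. ns_weight p z * pinned_box z a b undefined undefined)"
    using ns_decomp[OF ns] by simp
  also have "\<dots> = (\<Sum>z\<in>UNIV. ns_weight p z * (\<Sum>a\<in>UNIV. \<Sum>b\<in>UNIV. pinned_box z a b undefined undefined))"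
  proof -
    have "(\<Sum>a\<in>UNIV. \<Sum>b\<in>UNIV. \<Sum>z\<in>UNIV. ns_weight p z * pinned_box z a b undefined undefined)
      = (\<Sum>z\<in>UNIV. \<Sum>a\<in>UNIV. \<Sum>b\<in>UNIV. ns_weight p z * pinned_box z a b undefined undefined)"
      by (subst sum.swap, rule sum.cong[OF refl], rule sum.swap)
    then show ?thesis by (simp add: sum_distrib_left)
  qed
  also have "\<dots> = (\<Sum>z\<in>UNIV. ns_weight p z)" by (simp add: pb)
  finally show ?thesis ..
qed

lemma ns_bounds: assumes ns: "no_signalling p"
  shows "\<bar>p a b x y\<bar> \<le> 1" "0 \<le> marginal_A p a x" "marginal_A p a x \<le> 1"
    "0 \<le> marginal_B p b y" "marginal_B p b y \<le> 1"
proof -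
  have nn: "\<And>a b x y. 0 \<le> p a b x y" using ns unfolding no_signalling_def by auto
  have "p a b x y \<le> (\<Sum>b\<in>UNIV. p a b x y)" by (rule member_le_sum) (auto intro: nn)
  also have "\<dots> \<le> (\<Sum>a\<in>UNIV. \<Sum>b\<in>UNIV. p a b x y)"
    by (rule member_le_sum[where f="\<lambda>a. \<Sum>b\<in>UNIV. p a b x y"]) (auto intro: nn sum_nonneg)
  finally show "\<bar>p a b x y\<bar> \<le> 1" using ns nn[of a b x y] unfolding no_signalling_def by simp
  show "0 \<le> marginal_A p a x" unfolding marginal_A_def by (auto intro: nn sum_nonneg)
  have "marginal_A p a x \<le> (\<Sum>a\<in>UNIV. marginal_A p a x)"
    by (rule member_le_sum) (auto simp: marginal_A_def intro: nn sum_nonneg)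
  thus "marginal_A p a x \<le> 1" using sum_marginal_A[OF ns] by simp
  show "0 \<le> marginal_B p b y" unfolding marginal_B_def by (auto intro: nn sum_nonneg)
  have "marginal_B p b y \<le> (\<Sum>b\<in>UNIV. marginal_B p b y)"
    by (rule member_le_sum) (auto simp: marginal_B_def intro: nn sum_nonneg)
  thus "marginal_B p b y \<le> 1" using sum_marginal_B[OF ns] by simp
qed

text \<open>Every weight is a signed sum of four numbers in [0, 1].\<close>
lemma ns_weight_bound:
  fixes p :: "'a::finite \<Rightarrow> 'b::finite \<Rightarrow> 'x::finite \<Rightarrow> 'y::finite \<Rightarrow> real"
  assumes ns: "no_signalling p" shows "\<bar>ns_weight p z\<bar> \<le> 4"
proof -
  obtain x0 a0 y0 b0 where z: "z = ((x0,a0),(y0,b0))" by (metis prod.collapse)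
  note b = ns_bounds(1)[OF ns, of a0 b0 x0 y0] ns_bounds(2,3)[OF ns, of a0 x0]
    ns_bounds(4,5)[OF ns, of b0 y0] shift_bounds[where 'u='y and 'v='b] shift_bounds[where 'u='x and 'v='a]
  have "0 \<le> shift TYPE('y) TYPE('b) * marginal_A p a0 x0" "shift TYPE('y) TYPE('b) * marginal_A p a0 x0 \<le> 1"
    "0 \<le> shift TYPE('x) TYPE('a) * marginal_B p b0 y0" "shift TYPE('x) TYPE('a) * marginal_B p b0 y0 \<le> 1"
    "0 \<le> shift TYPE('y) TYPE('b) * shift TYPE('x) TYPE('a)" "shift TYPE('y) TYPE('b) * shift TYPE('x) TYPE('a) \<le> 1"
    using b by (simp_all add: mult_le_one)
  then show ?thesis using b(1) unfolding ns_weight_def ns_coeff_def z by (simp add: abs_le_iff)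
qed

lemma bij_enum: "\<exists>h. bij_betw h {..<card (UNIV :: 'z::finite set)} (UNIV :: 'z set)"
  using ex_bij_betw_nat_finite[of "UNIV :: 'z set"] by (auto simp: atLeast0LessThan)

lemma sum_enum_pair:
  fixes dA dB :: nat
  assumes hA: "bij_betw hA {..<dA} (UNIV :: 'u::finite set)" and hB: "bij_betw hB {..<dB} (UNIV :: 'v::finite set)"
  shows "(\<Sum>I<dA * dB. g (hA (I div dB)) (hB (I mod dB))) = (\<Sum>u\<in>UNIV. \<Sum>v\<in>UNIV. (g u v :: real))"
proof -
  have "(\<Sum>I<dA * dB. g (hA (I div dB)) (hB (I mod dB))) = (\<Sum>i<dA. \<Sum>j<dB. g (hA i) (hB j))"
    by (subst sum_pair) (intro sum.cong refl, simp)
  also have "\<dots> = (\<Sum>i<dA. \<Sum>v\<in>UNIV. g (hA i) v)"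
    by (intro sum.cong refl sum.reindex_bij_betw[OF hB])
  also have "\<dots> = (\<Sum>u\<in>UNIV. \<Sum>v\<in>UNIV. g u v)"
    by (rule sum.reindex_bij_betw[OF hA])
  finally show ?thesis .
qed

lemma povm_dmat:
  assumes "\<And>x a i. 0 \<le> P x a i" and "\<And>x i. (\<Sum>a\<in>UNIV. P x a i) = 1"
  shows "povm d (\<lambda>x a. dmat d (P x a))"
  unfolding povm_def
proof (intro conjI allI impI)
  fix x a show "psd d (dmat d (P x a))" by (rule psd_dmat) (simp add: assms)
next
  fix x i j assume "i < d" "j < d"
  then show "(\<Sum>a\<in>UNIV. dmat d (P x a) $$ (i,j)) = (if i = j then 1 else 0)"
    by (simp add: dmat_def assms flip: of_real_sum)
qed

text \<open>A real affine combination of products of local conditional distributions is realised by a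
  diagonal pseudo-state (the weights on the diagonal) with diagonal POVMs (the distributions).\<close>
lemma diagonal_realization:
  fixes w :: "'u::finite \<Rightarrow> 'v::finite \<Rightarrow> real"
    and P :: "'u \<Rightarrow> 'x::finite \<Rightarrow> 'a::finite \<Rightarrow> real" and Q :: "'v \<Rightarrow> 'y::finite \<Rightarrow> 'b::finite \<Rightarrow> real"
  assumes P: "\<And>u. cond_dist (P u)" and Q: "\<And>v. cond_dist (Q v)"
    and w: "(\<Sum>u\<in>UNIV. \<Sum>v\<in>UNIV. w u v) = 1"
    and p: "\<And>a b x y. p a b x y = (\<Sum>u\<in>UNIV. \<Sum>v\<in>UNIV. w u v * P u x a * Q v y b)"
  shows "\<exists>dA dB Op. pseudo_state (dA * dB) Op \<and> realizes dA dB Op p"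
proof -
  let ?dA = "card (UNIV :: 'u set)" and ?dB = "card (UNIV :: 'v set)"
  obtain hA where hA: "bij_betw hA {..<?dA} (UNIV :: 'u set)" using bij_enum by blast
  obtain hB where hB: "bij_betw hB {..<?dB} (UNIV :: 'v set)" using bij_enum by blast
  define M where "M x a = dmat ?dA (\<lambda>i. P (hA i) x a)" for x a
  define N where "N y b = dmat ?dB (\<lambda>j. Q (hB j) y b)" for y b
  define Op where "Op = dmat (?dA * ?dB) (\<lambda>I. w (hA (I div ?dB)) (hB (I mod ?dB)))"
  have povms: "povm ?dA M" "povm ?dB N" unfolding M_def N_def
    by (rule povm_dmat; use P Q in \<open>simp add: cond_dist_def\<close>)+
  have "mtrace Op = 1" unfolding Op_def mtrace_dmat sum_enum_pair[OF hA hB] w by simp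
  hence ps: "pseudo_state (?dA * ?dB) Op"
    unfolding pseudo_state_def hermitian_def Op_def by simp
  have "complex_of_real (p a b x y) = mtrace (kron ?dA ?dB (M x a) (N y b) * Op)" for a b x y
  proof -
    have "mtrace (kron ?dA ?dB (M x a) (N y b) * Op)
        = complex_of_real (\<Sum>I<?dA * ?dB. P (hA (I div ?dB)) x a * Q (hB (I mod ?dB)) y b
             * w (hA (I div ?dB)) (hB (I mod ?dB)))"
      unfolding M_def N_def Op_def kron_dmat dmat_mult mtrace_dmat ..
    also have "\<dots> = complex_of_real (p a b x y)"
      unfolding sum_enum_pair[OF hA hB, of "\<lambda>u v. P u x a * Q v y b * w u v"] p
      by (simp add: mult_ac)
    finally show ?thesis by simp
  qed
  hence "realizes ?dA ?dB Op p" unfolding realizes_def using povms by blast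
  thus ?thesis using ps by blast
qed

lemma ns_realizable: fixes p :: "'a::finite \<Rightarrow> 'b::finite \<Rightarrow> 'x::finite \<Rightarrow> 'y::finite \<Rightarrow> real"
  assumes ns: "no_signalling p"
  shows "\<exists>dA dB Op. pseudo_state (dA * dB) Op \<and> realizes dA dB Op p"
proof (rule diagonal_realization)
  show "(\<Sum>u\<in>UNIV. \<Sum>v\<in>UNIV. ns_weight p (u, v)) = 1"
    using sum_ns_weight[OF ns] by (simp add: sum_UNIV_pair[symmetric])
  show "p a b x y = (\<Sum>u\<in>UNIV. \<Sum>v\<in>UNIV. ns_weight p (u, v) * pinned_dist (fst u) (snd u) x a
      * pinned_dist (fst v) (snd v) y b)" for a b x y
    unfolding ns_decomp[OF ns, of a b x y] sum_UNIV_pair[of "\<lambda>z. ns_weight p z * pinned_box z a b x y"]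
    by (simp add: pinned_box_def case_prod_unfold mult_ac)
qed (rule cond_dist_pinned)+

section \<open>The affine local cost b_L\<close>

definition affine_costs :: "('a::finite \<Rightarrow> 'b::finite \<Rightarrow> 'x::finite \<Rightarrow> 'y::finite \<Rightarrow> real) \<Rightarrow> real set" where
  "affine_costs p = {(\<Sum>i<n. \<bar>c i\<bar>) | (n::nat) c ps.
      (\<forall>i<n. local_box (ps i)) \<and> (\<Sum>i<n. c i) = 1 \<and>
      (\<forall>a b x y. p a b x y = (\<Sum>i<n. c i * ps i a b x y))}"

lemma b_L_eq: "b_L p = Inf (affine_costs p)" unfolding b_L_def affine_costs_def ..

lemma affine_costs_ge1: assumes "s \<in> affine_costs p" shows "s \<ge> 1"
proof -
  obtain n :: nat and c where e: "s = (\<Sum>i<n. \<bar>c i\<bar>)" "(\<Sum>i<n. c i) = 1"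
    using assms unfolding affine_costs_def by blast
  have "\<bar>\<Sum>i<n. c i\<bar> \<le> (\<Sum>i<n. \<bar>c i\<bar>)" by (rule sum_abs)
  thus ?thesis using e by simp
qed

lemma bdd_affine_costs: "bdd_below (affine_costs p)"
  unfolding bdd_below_def using affine_costs_ge1 by fastforce

lemma ns_affine_cost: fixes p :: "'a::finite \<Rightarrow> 'b::finite \<Rightarrow> 'x::finite \<Rightarrow> 'y::finite \<Rightarrow> real"
  assumes ns: "no_signalling p"
  shows "\<exists>s\<in>affine_costs p. s \<le> 4 * real (card (UNIV :: (('x \<times> 'a) \<times> ('y \<times> 'b)) set))"
proof -
  let ?N = "(card (UNIV :: (('x \<times> 'a) \<times> ('y \<times> 'b)) set))"
  obtain h where h: "bij_betw h {..<?N} (UNIV :: (('x \<times> 'a) \<times> ('y \<times> 'b)) set)" using bij_enum by blast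
  have re: "(\<Sum>i<?N. g (h i)) = (\<Sum>z\<in>UNIV. g z)" for g :: "_ \<Rightarrow> real"
    using sum.reindex_bij_betw[OF h, of g] by simp
  have "(\<Sum>i<?N. \<bar>ns_weight p (h i)\<bar>) \<in> affine_costs p"
    unfolding affine_costs_def mem_Collect_eq
  proof (intro exI conjI)
    show "\<forall>i<?N. local_box (pinned_box (h i))" by (simp add: local_pinned_box)
    show "(\<Sum>i<?N. ns_weight p (h i)) = 1" unfolding re using sum_ns_weight[OF ns] .
    show "\<forall>a b x y. p a b x y = (\<Sum>i<?N. ns_weight p (h i) * pinned_box (h i) a b x y)"
      using ns_decomp[OF ns] re[of "\<lambda>z. ns_weight p z * pinned_box z _ _ _ _"] by simp
  qed simp
  moreover have "(\<Sum>i<?N. \<bar>ns_weight p (h i)\<bar>) \<le> (\<Sum>i<?N. 4)" by (intro sum_mono ns_weight_bound[OF ns])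
  ultimately show ?thesis by (auto simp: mult.commute)
qed

lemma b_L_bounds: fixes p :: "'a::finite \<Rightarrow> 'b::finite \<Rightarrow> 'x::finite \<Rightarrow> 'y::finite \<Rightarrow> real"
  assumes ns: "no_signalling p"
  shows "affine_costs p \<noteq> {}" "1 \<le> b_L p" "b_L p \<le> 4 * real (card (UNIV :: (('x \<times> 'a) \<times> ('y \<times> 'b)) set))"
proof -
  obtain s where s: "s \<in> affine_costs p" "s \<le> 4 * real (card (UNIV :: (('x \<times> 'a) \<times> ('y \<times> 'b)) set))"
    using ns_affine_cost[OF ns] by blast
  thus "affine_costs p \<noteq> {}" by auto
  show "1 \<le> b_L p" unfolding b_L_eq using s affine_costs_ge1 by (intro cInf_greatest) auto
  show "b_L p \<le> 4 * real (card (UNIV :: (('x \<times> 'a) \<times> ('y \<times> 'b)) set))"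
    using cInf_lower[OF s(1) bdd_affine_costs] s(2) unfolding b_L_eq by simp
qed

lemma sum_split_add: "(\<Sum>i<n1 + n2. f i) = (\<Sum>i<n1. f i) + (\<Sum>i<n2. f (n1 + i))" for f :: "nat \<Rightarrow> real"
  by (induct n2) (auto simp: add_Suc_right)

text \<open>Concatenating decompositions of q1 and q2 gives a decomposition of (1 + t) q1 - t q2.\<close>
lemma affine_costs_comb: fixes p :: "'a::finite \<Rightarrow> 'b::finite \<Rightarrow> 'x::finite \<Rightarrow> 'y::finite \<Rightarrow> real"
  assumes t: "t \<ge> 0" and pe: "\<forall>a b x y. p a b x y = (1 + t) * q1 a b x y - t * q2 a b x y"
    and s1: "s1 \<in> affine_costs q1" and s2: "s2 \<in> affine_costs q2"
  shows "(1 + t) * s1 + t * s2 \<in> affine_costs p"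
proof -
  obtain n1 c1 ps1 where e1: "s1 = (\<Sum>i<(n1::nat). \<bar>c1 i\<bar>)" "\<forall>i<n1. local_box (ps1 i)" "(\<Sum>i<n1. c1 i) = 1"
    "\<forall>a b x y. q1 a b x y = (\<Sum>i<n1. c1 i * ps1 i a b x y)" using s1 unfolding affine_costs_def by blast
  obtain n2 c2 ps2 where e2: "s2 = (\<Sum>i<(n2::nat). \<bar>c2 i\<bar>)" "\<forall>i<n2. local_box (ps2 i)" "(\<Sum>i<n2. c2 i) = 1"
    "\<forall>a b x y. q2 a b x y = (\<Sum>i<n2. c2 i * ps2 i a b x y)" using s2 unfolding affine_costs_def by blast
  define c where "c i = (if i < n1 then (1 + t) * c1 i else - t * c2 (i - n1))" for i
  define ps where "ps i = (if i < n1 then ps1 i else ps2 (i - n1))" for i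
  have c1: "\<And>i. i \<in> {..<n1} \<Longrightarrow> c i = (1 + t) * c1 i" and c2: "\<And>i. c (n1 + i) = - t * c2 i"
    unfolding c_def by auto
  have p1: "\<And>i. i \<in> {..<n1} \<Longrightarrow> ps i = ps1 i" and p2: "\<And>i. ps (n1 + i) = ps2 i"
    unfolding ps_def by auto
  have "\<forall>i<n1 + n2. local_box (ps i)" unfolding ps_def using e1(2) e2(2) by auto
  moreover have "(\<Sum>i<n1 + n2. c i) = 1"
  proof -
    have "(\<Sum>i<n1 + n2. c i) = (\<Sum>i<n1. (1 + t) * c1 i) + (\<Sum>i<n2. - t * c2 i)"
      unfolding sum_split_add c2 using c1 by simp
    thus ?thesis using e1(3) e2(3) by (simp add: sum_distrib_left[symmetric] sum_negf)
  qed
  moreover have "\<forall>a b x y. p a b x y = (\<Sum>i<n1 + n2. c i * ps i a b x y)"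
  proof (intro allI)
    fix a b x y
    have "(\<Sum>i<n1 + n2. c i * ps i a b x y)
        = (\<Sum>i<n1. (1 + t) * c1 i * ps1 i a b x y) + (\<Sum>i<n2. - t * c2 i * ps2 i a b x y)"
      unfolding sum_split_add c2 p2 using c1 p1 by simp
    also have "\<dots> = (1 + t) * q1 a b x y - t * q2 a b x y"
      using e1(4) e2(4) by (simp add: sum_distrib_left mult.assoc sum_negf)
    finally show "p a b x y = (\<Sum>i<n1 + n2. c i * ps i a b x y)" using pe by simp
  qed
  moreover have "(\<Sum>i<n1 + n2. \<bar>c i\<bar>) = (1 + t) * s1 + t * s2"
  proof -
    have "(\<Sum>i<n1 + n2. \<bar>c i\<bar>) = (\<Sum>i<n1. (1 + t) * \<bar>c1 i\<bar>) + (\<Sum>i<n2. t * \<bar>c2 i\<bar>)"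
      unfolding sum_split_add c2 using c1 t by (simp add: abs_mult)
    thus ?thesis unfolding e1(1) e2(1) by (simp add: sum_distrib_left)
  qed
  ultimately show ?thesis unfolding affine_costs_def mem_Collect_eq
    by (intro exI[of _ "n1 + n2"] exI[of _ c] exI[of _ ps]) auto
qed

text \<open>Hence b_L is subadditive along such splittings (taking infima in both factors).\<close>
lemma b_L_comb: fixes p :: "'a::finite \<Rightarrow> 'b::finite \<Rightarrow> 'x::finite \<Rightarrow> 'y::finite \<Rightarrow> real"
  assumes t: "t \<ge> 0" and pe: "\<forall>a b x y. p a b x y = (1 + t) * q1 a b x y - t * q2 a b x y"
    and ns1: "no_signalling q1" and ns2: "no_signalling q2"
  shows "b_L p \<le> (1 + t) * b_L q1 + t * b_L q2"
proof -
  have ne1: "affine_costs q1 \<noteq> {}" and ne2: "affine_costs q2 \<noteq> {}" using b_L_bounds(1) ns1 ns2 by auto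
  have le: "b_L p \<le> (1 + t) * s1 + t * s2" if "s1 \<in> affine_costs q1" "s2 \<in> affine_costs q2" for s1 s2
    unfolding b_L_eq by (rule cInf_lower[OF affine_costs_comb[OF t pe that] bdd_affine_costs])
  have le2: "b_L p \<le> (1 + t) * b_L q1 + t * s2" if s2: "s2 \<in> affine_costs q2" for s2
  proof -
    have "(b_L p - t * s2) / (1 + t) \<le> b_L q1" unfolding b_L_eq[of q1]
    proof (rule cInf_greatest[OF ne1])
      fix s1 assume "s1 \<in> affine_costs q1"
      from le[OF this s2] show "(b_L p - t * s2) / (1 + t) \<le> s1" using t by (simp add: divide_le_eq algebra_simps)
    qed
    thus ?thesis using t by (simp add: divide_le_eq algebra_simps)
  qed
  show ?thesis
  proof (cases "t = 0")
    case True
    obtain s2 where "s2 \<in> affine_costs q2" using ne2 by auto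
    thus ?thesis using le2 True by fastforce
  next
    case False
    hence tp: "t > 0" using t by simp
    have "(b_L p - (1 + t) * b_L q1) / t \<le> b_L q2" unfolding b_L_eq[of q2]
    proof (rule cInf_greatest[OF ne2])
      fix s2 assume "s2 \<in> affine_costs q2"
      from le2[OF this] show "(b_L p - (1 + t) * b_L q1) / t \<le> s2" using tp by (simp add: divide_le_eq algebra_simps)
    qed
    thus ?thesis using tp by (simp add: divide_le_eq algebra_simps)
  qed
qed

section \<open>Quantities bounded along quantum splittings\<close>

definition bounds_quantum_splittings :: "real \<Rightarrow> ('a::finite \<Rightarrow> 'b::finite \<Rightarrow> 'x::finite \<Rightarrow> 'y::finite \<Rightarrow> real) \<Rightarrow> bool" where
  "bounds_quantum_splittings X p \<longleftrightarrow> (\<forall>t q1 q2. t \<ge> 0 \<and> quantum_box q1 \<and> quantum_box q2 \<and>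
     (\<forall>a b x y. p a b x y = (1 + t) * q1 a b x y - t * q2 a b x y) \<longrightarrow> X \<le> 1 + 2 * t)"

lemma quotient_bounds_quantum_splittings:
  fixes F :: "('a::finite \<Rightarrow> 'b::finite \<Rightarrow> 'x::finite \<Rightarrow> 'y::finite \<Rightarrow> real) \<Rightarrow> real"
  assumes bdd: "bdd_above (F ` {q. quantum_box q})"
    and nonneg: "\<And>q. quantum_box q \<Longrightarrow> 0 \<le> F q"
    and split: "\<And>t q1 q2. t \<ge> 0 \<Longrightarrow> quantum_box q1 \<Longrightarrow> quantum_box q2 \<Longrightarrow>
        \<forall>a b x y. p a b x y = (1 + t) * q1 a b x y - t * q2 a b x y \<Longrightarrow> F p \<le> (1 + t) * F q1 + t * F q2"
  shows "bounds_quantum_splittings (F p / Sup (F ` {q. quantum_box q})) p"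
  unfolding bounds_quantum_splittings_def
proof (intro allI impI, elim conjE)
  fix t q1 q2 assume t: "t \<ge> 0" and Q1: "quantum_box q1" and Q2: "quantum_box q2"
    and pe: "\<forall>a b x y. p a b x y = (1 + t) * q1 a b x y - t * q2 a b x y"
  let ?S = "Sup (F ` {q. quantum_box q})"
  have u1: "F q1 \<le> ?S" and u2: "F q2 \<le> ?S" using Q1 Q2 by (auto intro: cSup_upper[OF _ bdd])
  have "F p \<le> (1 + t) * F q1 + t * F q2" by (rule split[OF t Q1 Q2 pe])
  also have "\<dots> \<le> (1 + t) * ?S + t * ?S" using u1 u2 t by (intro add_mono mult_left_mono) auto
  also have "\<dots> = (1 + 2 * t) * ?S" by (simp add: algebra_simps)
  finally have le: "F p \<le> (1 + 2 * t) * ?S" .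
  show "F p / ?S \<le> 1 + 2 * t"
  proof (cases "?S = 0")
    case False
    then have "?S > 0" using u1 nonneg[OF Q1] by linarith
    then show ?thesis using le by (simp add: divide_le_eq)
  qed (use t in simp)
qed

lemma Bval_lin: assumes "\<forall>a b x y. p a b x y = (1 + t) * q1 a b x y - t * q2 a b x y"
  shows "Bval B p = (1 + t) * Bval B q1 - t * Bval B q2"
proof -
  have "p = (\<lambda>a b x y. (1 + t) * q1 a b x y - t * q2 a b x y)" using assms by (intro ext) simp
  thus ?thesis unfolding Bval_def
    by (simp add: sum_distrib_left sum_subtractf right_diff_distrib mult.left_commute)
qed

text \<open>A linear functional is bounded on no-signalling boxes, whose entries lie in [0, 1].\<close>
lemma Bval_bound: assumes ns: "no_signalling q"
  shows "\<bar>Bval B q\<bar> \<le> (\<Sum>a\<in>UNIV. \<Sum>b\<in>UNIV. \<Sum>x\<in>UNIV. \<Sum>y\<in>UNIV. \<bar>B a b x y\<bar>)"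
proof -
  have "\<bar>Bval B q\<bar> \<le> (\<Sum>a\<in>UNIV. \<Sum>b\<in>UNIV. \<Sum>x\<in>UNIV. \<Sum>y\<in>UNIV. \<bar>B a b x y * q a b x y\<bar>)"
    unfolding Bval_def
    by (rule order_trans[OF sum_abs], rule sum_mono, rule order_trans[OF sum_abs], rule sum_mono,
        rule order_trans[OF sum_abs], rule sum_mono, rule sum_abs)
  also have "\<dots> \<le> (\<Sum>a\<in>UNIV. \<Sum>b\<in>UNIV. \<Sum>x\<in>UNIV. \<Sum>y\<in>UNIV. \<bar>B a b x y\<bar>)"
    using ns_bounds(1)[OF ns] by (intro sum_mono) (simp add: abs_mult mult_left_le)
  finally show ?thesis .
qed

text \<open>Part (i): by linearity, |B(p)| \<le> (1 + t) |B(q1)| + t |B(q2)|.\<close>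
lemma Bval_bounds_quantum_splittings:
  fixes p :: "'a::finite \<Rightarrow> 'b::finite \<Rightarrow> 'x::finite \<Rightarrow> 'y::finite \<Rightarrow> real"
  shows "bounds_quantum_splittings (\<bar>Bval B p\<bar> / Sup ((\<lambda>q. \<bar>Bval B q\<bar>) ` {q. quantum_box q})) p"
proof (rule quotient_bounds_quantum_splittings)
  show "bdd_above ((\<lambda>q. \<bar>Bval B q\<bar>) ` {q :: 'a \<Rightarrow> 'b \<Rightarrow> 'x \<Rightarrow> 'y \<Rightarrow> real. quantum_box q})"
    by (rule bdd_aboveI[where M="\<Sum>a\<in>UNIV. \<Sum>b\<in>UNIV. \<Sum>x\<in>UNIV. \<Sum>y\<in>UNIV. \<bar>B a b x y\<bar>"])
       (auto intro: Bval_bound quantum_box_no_signalling)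
  fix t q1 q2 assume t: "t \<ge> 0" and pe: "\<forall>a b x y. p a b x y = (1 + t) * q1 a b x y - t * q2 a b x y"
  have "\<bar>(1 + t) * Bval B q1 - t * Bval B q2\<bar> \<le> \<bar>(1 + t) * Bval B q1\<bar> + \<bar>t * Bval B q2\<bar>"
    by (rule abs_triangle_ineq4)
  thus "\<bar>Bval B p\<bar> \<le> (1 + t) * \<bar>Bval B q1\<bar> + t * \<bar>Bval B q2\<bar>"
    unfolding Bval_lin[OF pe] using t by (simp add: abs_mult)
qed simp

lemma b_L_bounds_quantum_splittings:
  fixes p :: "'a::finite \<Rightarrow> 'b::finite \<Rightarrow> 'x::finite \<Rightarrow> 'y::finite \<Rightarrow> real"
  shows "bounds_quantum_splittings (b_L p / Sup (b_L ` {q :: 'a \<Rightarrow> 'b \<Rightarrow> 'x \<Rightarrow> 'y \<Rightarrow> real. quantum_box q})) p"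
proof (rule quotient_bounds_quantum_splittings)
  show "bdd_above (b_L ` {q :: 'a \<Rightarrow> 'b \<Rightarrow> 'x \<Rightarrow> 'y \<Rightarrow> real. quantum_box q})"
    by (rule bdd_aboveI[where M="4 * real (card (UNIV :: (('x \<times> 'a) \<times> ('y \<times> 'b)) set))"])
       (auto intro: b_L_bounds(3) quantum_box_no_signalling)
  show "0 \<le> b_L q" if "quantum_box q" for q :: "'a \<Rightarrow> 'b \<Rightarrow> 'x \<Rightarrow> 'y \<Rightarrow> real"
    using b_L_bounds(2)[OF quantum_box_no_signalling[OF that]] by simp
  show "b_L p \<le> (1 + t) * b_L q1 + t * b_L q2"
    if "t \<ge> 0" "quantum_box q1" "quantum_box q2"
      "\<forall>a b x y. p a b x y = (1 + t) * q1 a b x y - t * q2 a b x y" for t q1 q2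
    using b_L_comb that quantum_box_no_signalling by blast
qed

text \<open>Via the Jordan decomposition, a bound on quantum splittings bounds the trace norm.\<close>
lemma bounds_quantum_splittings_trace_norm:
  assumes X: "bounds_quantum_splittings X p" and ps: "pseudo_state (dA * dB) Op"
    and re: "realizes dA dB Op p"
  shows "X \<le> trace_norm Op"
proof -
  obtain t \<rho>1 \<rho>2 where d: "t \<ge> 0" "density (dA*dB) \<rho>1" "density (dA*dB) \<rho>2"
    "\<forall>i<dA*dB. \<forall>j<dA*dB. Op $$ (i,j) = complex_of_real (1 + t) * \<rho>1 $$ (i,j) - complex_of_real t * \<rho>2 $$ (i,j)"
    "trace_norm Op = 1 + 2 * t" using pseudo_state_jordan[OF ps] by blast
  have Opc: "Op \<in> carrier_mat (dA*dB) (dA*dB)" using ps unfolding pseudo_state_def hermitian_def by auto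
  show ?thesis using realizes_split[OF re Opc d(2,3,4)] X d(1,5) unfolding bounds_quantum_splittings_def by auto
qed

lemma r_D_admissible_iff:
  assumes Opc: "Op \<in> carrier_mat n n" and R': "density n \<rho>'" and t: "t \<ge> 0"
  shows "density n ((1 / (1 + complex_of_real t)) \<cdot>\<^sub>m (Op + complex_of_real t \<cdot>\<^sub>m \<rho>')) \<longleftrightarrow>
    (\<exists>\<rho>. density n \<rho> \<and>
       (\<forall>i<n. \<forall>j<n. Op $$ (i,j) = complex_of_real (1 + t) * \<rho> $$ (i,j) - complex_of_real t * \<rho>' $$ (i,j)))"
    (is "?adm \<longleftrightarrow> ?split")
proof
  have nz: "1 + complex_of_real t \<noteq> 0" using t
    by (metis add_nonneg_eq_0_iff of_real_1 of_real_add of_real_eq_0_iff zero_le_one one_neq_zero)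
  note R'c = density_carrier[OF R']
  show "?adm \<Longrightarrow> ?split" using Opc R'c nz by (intro exI[of _ "(1 / (1 + complex_of_real t)) \<cdot>\<^sub>m (Op + complex_of_real t \<cdot>\<^sub>m \<rho>')"])
      (auto simp: field_simps)
  assume ?split
  then obtain \<rho> where R: "density n \<rho>"
    and eq: "\<forall>i<n. \<forall>j<n. Op $$ (i,j) = complex_of_real (1 + t) * \<rho> $$ (i,j) - complex_of_real t * \<rho>' $$ (i,j)"
    by blast
  have "(1 / (1 + complex_of_real t)) \<cdot>\<^sub>m (Op + complex_of_real t \<cdot>\<^sub>m \<rho>') = \<rho>"
    by (rule eq_matI) (use Opc R'c density_carrier[OF R] eq nz in \<open>auto simp: field_simps\<close>)
  then show ?adm using R by simp
qed

text \<open>The Jordan decomposition provides an admissible t, and every admissible t gives a quantum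
  splitting of p; so a bound X on quantum splittings gives (X - 1)/2 \<le> r_D(O).\<close>
lemma bounds_quantum_splittings_r_D_op:
  assumes X: "bounds_quantum_splittings X p" and ps: "pseudo_state (dA * dB) Op"
    and re: "realizes dA dB Op p"
  shows "(X - 1) / 2 \<le> r_D_op (dA * dB) Op"
proof -
  let ?n = "dA * dB"
  let ?T = "{t. 0 \<le> t \<and> (\<exists>\<rho>'. density ?n \<rho>' \<and> density ?n ((1 / (1 + complex_of_real t)) \<cdot>\<^sub>m (Op + complex_of_real t \<cdot>\<^sub>m \<rho>')))}"
  have Opc: "Op \<in> carrier_mat ?n ?n" using ps unfolding pseudo_state_def hermitian_def by auto
  obtain t0 \<rho>1 \<rho>2 where "t0 \<ge> 0" "density ?n \<rho>1" "density ?n \<rho>2"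
    "\<forall>i<?n. \<forall>j<?n. Op $$ (i,j) = complex_of_real (1 + t0) * \<rho>1 $$ (i,j) - complex_of_real t0 * \<rho>2 $$ (i,j)"
    using pseudo_state_jordan[OF ps] by blast
  hence "t0 \<in> ?T" using r_D_admissible_iff[OF Opc] by blast
  moreover have "(X - 1) / 2 \<le> t" if "t \<in> ?T" for t
  proof -
    obtain \<rho>' \<rho> where t: "t \<ge> 0" and R': "density ?n \<rho>'" and R: "density ?n \<rho>"
      and eq: "\<forall>i<?n. \<forall>j<?n. Op $$ (i,j) = complex_of_real (1 + t) * \<rho> $$ (i,j) - complex_of_real t * \<rho>' $$ (i,j)"
      using \<open>t \<in> ?T\<close> r_D_admissible_iff[OF Opc] by blast
    show ?thesis using realizes_split[OF re Opc R R' eq] X t unfolding bounds_quantum_splittings_def by force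
  qed
  ultimately show ?thesis unfolding r_D_op_def by (intro cInf_greatest) auto
qed

text \<open>Taking the infimum over all pseudo-states realising p, which is over a nonempty set since
  no-signalling boxes are realisable.\<close>
lemma bounds_quantum_splittings_r_D_box:
  fixes p :: "'a::finite \<Rightarrow> 'b::finite \<Rightarrow> 'x::finite \<Rightarrow> 'y::finite \<Rightarrow> real"
  assumes ns: "no_signalling p" and X: "bounds_quantum_splittings X p"
  shows "(X - 1) / 2 \<le> r_D_box p"
  unfolding r_D_box_def
proof (rule cInf_greatest)
  show "{r_D_op (dA * dB) Op |dA dB Op. pseudo_state (dA * dB) Op \<and> realizes dA dB Op p} \<noteq> {}"
    using ns_realizable[OF ns] by blast
qed (use bounds_quantum_splittings_r_D_op[OF X] in blast)

text \<open>Both quotients bound the quantum splittings of p, so both lower bounds follow.\<close>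
theorem proposition2:
  fixes p :: "'a::finite \<Rightarrow> 'b::finite \<Rightarrow> 'x::finite \<Rightarrow> 'y::finite \<Rightarrow> real"
  assumes "no_signalling p"
  shows "(\<forall>B :: 'a \<Rightarrow> 'b \<Rightarrow> 'x \<Rightarrow> 'y \<Rightarrow> real.
            (\<forall>pL. local_box pL \<longrightarrow> \<bar>Bval B pL\<bar> \<le> 1) \<longrightarrow>
            (let BQ = Sup ((\<lambda>q. \<bar>Bval B q\<bar>) ` {q. quantum_box q}) in
               (\<bar>Bval B p\<bar> / BQ - 1) / 2 \<le> r_D_box p \<and>
               (\<forall>dA dB Op. pseudo_state (dA * dB) Op \<and> realizes dA dB Op p \<longrightarrow>
                  \<bar>Bval B p\<bar> / BQ \<le> trace_norm Op)))
       \<and> (let bQ = Sup (b_L ` {q :: 'a \<Rightarrow> 'b \<Rightarrow> 'x \<Rightarrow> 'y \<Rightarrow> real. quantum_box q}) in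
               (b_L p / bQ - 1) / 2 \<le> r_D_box p \<and>
               (\<forall>dA dB Op. pseudo_state (dA * dB) Op \<and> realizes dA dB Op p \<longrightarrow>
                  b_L p / bQ \<le> trace_norm Op))"
  using bounds_quantum_splittings_r_D_box[OF assms Bval_bounds_quantum_splittings]
    bounds_quantum_splittings_trace_norm[OF Bval_bounds_quantum_splittings]
    bounds_quantum_splittings_r_D_box[OF assms b_L_bounds_quantum_splittings]
    bounds_quantum_splittings_trace_norm[OF b_L_bounds_quantum_splittings]
  unfolding Let_def by blast

end
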